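(* Let $G$ be a graph and $H$ the graph obtained from $G$ by a $Q$-switching with switching set $X$. Suppose that the neighborhood graph $G_X$ is a disjoint union of cycles and that $G_X[X]$ is a disjoint union of paths. Then $G_X[X\cup Y]\cong H_X[X\cup Y]$ for every $Y\subseteq N(X)$.
   Context: Graphs are finite and simple. $Q$ is a $k\times k$ real orthogonal matrix with no integral rows. $H$ is obtained from $G$ by a $Q$-switching with switching set $X$ ($|X|=k$) if $H$ has the same vertex set $V$ and, after ordering vertices with $X$ first, $A_H=M^TA_GM$ with $M=\operatorname{diag}(Q,-I_a,I_b)$ block diagonal, $a+b=|V|-k$. $N(X)$ is the set of vertices of $G$ adjacent to some vertex of $X$. The neighborhood graph $G_X$ has vertex set $X\cup N(X)$ and edge set the edges of $G$ with at least one endpoint in $X$; $H_X$ is defined analogously in $H$. $\Gamma[S]$ denotes the subgraph of $\Gamma$ induced on $S$. A single vertex counts as a path. *)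

theory Defs
  imports Complex_Main
begin

type_synonym 'a graph = "'a set \<times> 'a set set"

definition is_graph :: "'a graph \<Rightarrow> bool" where
  "is_graph \<Gamma> \<longleftrightarrow> finite (fst \<Gamma>) \<and>
     (\<forall>e\<in>snd \<Gamma>. \<exists>u v. e = {u, v} \<and> u \<noteq> v \<and> u \<in> fst \<Gamma> \<and> v \<in> fst \<Gamma>)"

definition adjm :: "'a graph \<Rightarrow> 'a \<Rightarrow> 'a \<Rightarrow> real" where
  "adjm \<Gamma> u v = (if {u, v} \<in> snd \<Gamma> then 1 else 0)"

text \<open>Q is a real matrix indexed by the switching set X (rows by the first index).\<close>
definition orthogonal_on :: "'a set \<Rightarrow> ('a \<Rightarrow> 'a \<Rightarrow> real) \<Rightarrow> bool" where
  "orthogonal_on X Q \<longleftrightarrow>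
     (\<forall>x\<in>X. \<forall>y\<in>X. (\<Sum>z\<in>X. Q z x * Q z y) = (if x = y then 1 else 0)) \<and>
     (\<forall>x\<in>X. \<forall>y\<in>X. (\<Sum>z\<in>X. Q x z * Q y z) = (if x = y then 1 else 0))"

definition no_integral_rows :: "'a set \<Rightarrow> ('a \<Rightarrow> 'a \<Rightarrow> real) \<Rightarrow> bool" where
  "no_integral_rows X Q \<longleftrightarrow> (\<forall>x\<in>X. \<exists>y\<in>X. Q x y \<notin> \<int>)"

text \<open>The block matrix diag(Q, -I_a, I_b); the signs on V - X are given by s.\<close>
definition switch_matrix :: "'a set \<Rightarrow> ('a \<Rightarrow> 'a \<Rightarrow> real) \<Rightarrow> ('a \<Rightarrow> real) \<Rightarrow> 'a \<Rightarrow> 'a \<Rightarrow> real" where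
  "switch_matrix X Q s u v =
     (if u \<in> X \<and> v \<in> X then Q u v else if u = v \<and> u \<notin> X then s u else 0)"

definition Q_switching :: "'a graph \<Rightarrow> 'a graph \<Rightarrow> 'a set \<Rightarrow> ('a \<Rightarrow> 'a \<Rightarrow> real) \<Rightarrow> bool" where
  "Q_switching G H X Q \<longleftrightarrow>
     is_graph G \<and> is_graph H \<and> fst H = fst G \<and> X \<subseteq> fst G \<and>
     orthogonal_on X Q \<and> no_integral_rows X Q \<and>
     (\<exists>s. (\<forall>v\<in>fst G - X. s v = -1 \<or> s v = 1) \<and>
        (\<forall>u\<in>fst G. \<forall>w\<in>fst G.
           adjm H u w = (\<Sum>x\<in>fst G. \<Sum>y\<in>fst G.
              switch_matrix X Q s x u * adjm G x y * switch_matrix X Q s y w)))"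

definition nbhd :: "'a graph \<Rightarrow> 'a set \<Rightarrow> 'a set" where
  "nbhd \<Gamma> X = {v \<in> fst \<Gamma>. \<exists>x\<in>X. {x, v} \<in> snd \<Gamma>}"

definition nbhd_graph :: "'a graph \<Rightarrow> 'a set \<Rightarrow> 'a graph" where
  "nbhd_graph \<Gamma> X = (X \<union> nbhd \<Gamma> X, {e \<in> snd \<Gamma>. e \<inter> X \<noteq> {}})"

definition induced :: "'a graph \<Rightarrow> 'a set \<Rightarrow> 'a graph" where
  "induced \<Gamma> S = (fst \<Gamma> \<inter> S, {e \<in> snd \<Gamma>. e \<subseteq> S})"

definition is_path_graph :: "'a graph \<Rightarrow> bool" where
  "is_path_graph \<Gamma> \<longleftrightarrow> (\<exists>vs. vs \<noteq> [] \<and> distinct vs \<and> set vs = fst \<Gamma> \<and>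
     snd \<Gamma> = {{vs ! i, vs ! Suc i} | i. Suc i < length vs})"

definition is_cycle_graph :: "'a graph \<Rightarrow> bool" where
  "is_cycle_graph \<Gamma> \<longleftrightarrow> (\<exists>vs. length vs \<ge> 3 \<and> distinct vs \<and> set vs = fst \<Gamma> \<and>
     snd \<Gamma> = {{vs ! i, vs ! (Suc i mod length vs)} | i. i < length vs})"

definition disjoint_union_of :: "('a graph \<Rightarrow> bool) \<Rightarrow> 'a graph \<Rightarrow> bool" where
  "disjoint_union_of P \<Gamma> \<longleftrightarrow> (\<exists>C. (\<forall>c\<in>C. c \<noteq> {}) \<and> \<Union>C = fst \<Gamma> \<and>
     (\<forall>c\<in>C. \<forall>d\<in>C. c \<noteq> d \<longrightarrow> c \<inter> d = {}) \<and>
     (\<forall>e\<in>snd \<Gamma>. \<exists>c\<in>C. e \<subseteq> c) \<and> (\<forall>c\<in>C. P (induced \<Gamma> c)))"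

definition isomorphic :: "'a graph \<Rightarrow> 'b graph \<Rightarrow> bool" where
  "isomorphic \<Gamma> \<Delta> \<longleftrightarrow> (\<exists>f. bij_betw f (fst \<Gamma>) (fst \<Delta>) \<and>
     (\<forall>u\<in>fst \<Gamma>. \<forall>v\<in>fst \<Gamma>. {u, v} \<in> snd \<Gamma> \<longleftrightarrow> {f u, f v} \<in> snd \<Delta>))"

end

theory Submission
  imports Defs "HOL-Library.Disjoint_Sets"
begin

text \<open>Restricted to \<open>V = X \<union> N\<close> with \<open>N = N(X) - X\<close>, the switching matrix \<open>M = diag(Q, \<plusminus>1)\<close> is
  orthogonal and conjugates the adjacency matrix of \<open>G\<^sub>X\<close> into that of \<open>H\<^sub>X\<close>. As \<open>G\<^sub>X\<close> is
  2-regular, the trace of the squared adjacency matrix together with a Cauchy-Schwarz bound on the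
  row sums forces \<open>H\<^sub>X\<close> to be 2-regular as well, so both graphs split into segments: paths
  through \<open>X\<close> whose ends lie in \<open>N\<close>. On \<open>N\<close> the matrix \<open>M\<close> is a sign matrix, so conjugation
  preserves, up to sign and hence exactly, the number of walks between two vertices of \<open>N\<close> with
  all inner vertices in \<open>X\<close>; these numbers determine how many segments of each length join the two
  vertices. A segment returning to its start closes up to a whole cycle, whose indicator is an
  eigenvector for the eigenvalue 2; conjugating it bounds the cycle through the same vertex in the
  other graph. Matching segments with equal ends and lengths yields a permutation of \<open>X\<close> that
  together with the identity on \<open>N(X)\<close> is the required isomorphism.\<close>

section \<open>Matrices indexed by a finite set\<close>

definition mat_mult :: "'a set \<Rightarrow> ('a \<Rightarrow> 'a \<Rightarrow> real) \<Rightarrow> ('a \<Rightarrow> 'a \<Rightarrow> real) \<Rightarrow> 'a \<Rightarrow> 'a \<Rightarrow> real" where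
  "mat_mult S A B x y = (\<Sum>z\<in>S. A x z * B z y)"

definition transpose_mat :: "('a \<Rightarrow> 'a \<Rightarrow> real) \<Rightarrow> 'a \<Rightarrow> 'a \<Rightarrow> real" where
  "transpose_mat M x y = M y x"

definition id_mat :: "'a \<Rightarrow> 'a \<Rightarrow> real" where
  "id_mat x y = (if x = y then 1 else 0)"

definition rel_mat :: "('a \<Rightarrow> 'a \<Rightarrow> bool) \<Rightarrow> 'a \<Rightarrow> 'a \<Rightarrow> real" where
  "rel_mat R x y = (if R x y then 1 else 0)"

fun mat_pow :: "'a set \<Rightarrow> ('a \<Rightarrow> 'a \<Rightarrow> real) \<Rightarrow> nat \<Rightarrow> 'a \<Rightarrow> 'a \<Rightarrow> real" where
  "mat_pow S A 0 = id_mat"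
| "mat_pow S A (Suc j) = mat_mult S A (mat_pow S A j)"

definition conj_mat :: "'a set \<Rightarrow> ('a \<Rightarrow> 'a \<Rightarrow> real) \<Rightarrow> ('a \<Rightarrow> 'a \<Rightarrow> real) \<Rightarrow> 'a \<Rightarrow> 'a \<Rightarrow> real" where
  "conj_mat S M A = mat_mult S (mat_mult S (transpose_mat M) A) M"

definition orthogonal_mat :: "'a set \<Rightarrow> ('a \<Rightarrow> 'a \<Rightarrow> real) \<Rightarrow> bool" where
  "orthogonal_mat S M \<longleftrightarrow>
     (\<forall>x\<in>S. \<forall>y\<in>S. mat_mult S M (transpose_mat M) x y = id_mat x y) \<and>
     (\<forall>x\<in>S. \<forall>y\<in>S. mat_mult S (transpose_mat M) M x y = id_mat x y)"

lemma mat_mult_assoc: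
  assumes "finite S"
  shows "mat_mult S (mat_mult S A B) C = mat_mult S A (mat_mult S B C)"
proof (intro ext)
  fix x y
  have "mat_mult S (mat_mult S A B) C x y = (\<Sum>z\<in>S. \<Sum>w\<in>S. A x w * B w z * C z y)"
    unfolding mat_mult_def by (simp add: sum_distrib_right)
  also have "\<dots> = (\<Sum>w\<in>S. \<Sum>z\<in>S. A x w * B w z * C z y)"
    by (rule sum.swap)
  also have "\<dots> = mat_mult S A (mat_mult S B C) x y"
    unfolding mat_mult_def by (simp add: sum_distrib_left mult.assoc)
  finally show "mat_mult S (mat_mult S A B) C x y = mat_mult S A (mat_mult S B C) x y" .
qed

lemma mat_mult_id_left: "finite S \<Longrightarrow> x \<in> S \<Longrightarrow> mat_mult S id_mat A x y = A x y"
proof -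
  assume "finite S" "x \<in> S"
  have "mat_mult S id_mat A x y = (\<Sum>z\<in>S. if x = z then A z y else 0)"
    unfolding mat_mult_def id_mat_def by (rule sum.cong) auto
  then show ?thesis using \<open>finite S\<close> \<open>x \<in> S\<close> by simp
qed

lemma mat_mult_id_right: "finite S \<Longrightarrow> y \<in> S \<Longrightarrow> mat_mult S A id_mat x y = A x y"
proof -
  assume "finite S" "y \<in> S"
  have "mat_mult S A id_mat x y = (\<Sum>z\<in>S. if z = y then A x z else 0)"
    unfolding mat_mult_def id_mat_def by (rule sum.cong) auto
  then show ?thesis using \<open>finite S\<close> \<open>y \<in> S\<close> by simp
qed

lemma mat_mult_cong:
  assumes "\<And>z. z \<in> S \<Longrightarrow> A x z = A' x z" "\<And>z. z \<in> S \<Longrightarrow> B z y = B' z y"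
  shows "mat_mult S A B x y = mat_mult S A' B' x y"
  unfolding mat_mult_def using assms by (intro sum.cong) auto

lemma transpose_transpose_mat: "transpose_mat (transpose_mat M) = M" unfolding transpose_mat_def by (intro ext) simp

lemma orthogonal_mat_rows: "orthogonal_mat S M \<Longrightarrow> a \<in> S \<Longrightarrow> c \<in> S \<Longrightarrow> (\<Sum>u\<in>S. M a u * M c u) = id_mat a c"
  unfolding orthogonal_mat_def mat_mult_def transpose_mat_def by simp

lemma orthogonal_mat_cols: "orthogonal_mat S M \<Longrightarrow> a \<in> S \<Longrightarrow> c \<in> S \<Longrightarrow> (\<Sum>u\<in>S. M u a * M u c) = id_mat a c"
  unfolding orthogonal_mat_def mat_mult_def transpose_mat_def by simp

lemma orthogonal_mat_transpose: "orthogonal_mat S M \<Longrightarrow> orthogonal_mat S (transpose_mat M)"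
  unfolding orthogonal_mat_def transpose_mat_def mat_mult_def by (simp add: mult.commute)

lemma conj_mat_expand:
  "conj_mat S M A u w = (\<Sum>x\<in>S. \<Sum>y\<in>S. M x u * A x y * M y w)"
  unfolding conj_mat_def mat_mult_def transpose_mat_def
  by (simp add: sum_distrib_right) (rule sum.swap)

lemma conj_mat_cong:
  assumes "\<And>x y. x \<in> S \<Longrightarrow> y \<in> S \<Longrightarrow> M x u \<noteq> 0 \<Longrightarrow> M y w \<noteq> 0 \<Longrightarrow> A x y = B x y"
  shows "conj_mat S M A u w = conj_mat S M B u w"
  unfolding conj_mat_expand using assms by (intro sum.cong refl) (metis mult_eq_0_iff)

lemma conj_mat_restrict:
  assumes S: "finite S" and T: "T \<subseteq> S" and A: "\<And>x y. A x y \<noteq> 0 \<Longrightarrow> x \<in> T \<and> y \<in> T"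
  shows "conj_mat S M A u w = conj_mat T M A u w"
proof -
  have "(\<Sum>y\<in>S. M x u * A x y * M y w) = (\<Sum>y\<in>T. M x u * A x y * M y w)" for x
    using S T A by (intro sum.mono_neutral_right) auto
  moreover have "(\<Sum>x\<in>S. \<Sum>y\<in>T. M x u * A x y * M y w) = (\<Sum>x\<in>T. \<Sum>y\<in>T. M x u * A x y * M y w)"
  proof (intro sum.mono_neutral_right ballI)
    fix x assume "x \<in> S - T"
    then show "(\<Sum>y\<in>T. M x u * A x y * M y w) = 0" using A by (intro sum.neutral ballI) (metis DiffD2 mult_eq_0_iff)
  qed (use S T in auto)
  ultimately show ?thesis unfolding conj_mat_expand by simp
qed

lemma conj_mat_mult:
  assumes S: "finite S" and o: "orthogonal_mat S M" and x: "x \<in> S" and y: "y \<in> S"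
  shows "conj_mat S M (mat_mult S A B) x y = mat_mult S (conj_mat S M A) (conj_mat S M B) x y"
proof -
  let ?Mt = "transpose_mat M"
  have "mat_mult S (conj_mat S M A) (conj_mat S M B) x y = mat_mult S (mat_mult S ?Mt A) (mat_mult S (mat_mult S M ?Mt) (mat_mult S B M)) x y"
    unfolding conj_mat_def using S by (simp add: mat_mult_assoc)
  also have "\<dots> = mat_mult S (mat_mult S ?Mt A) (mat_mult S id_mat (mat_mult S B M)) x y"
  proof (rule mat_mult_cong[OF refl])
    fix z assume z: "z \<in> S"
    show "mat_mult S (mat_mult S M ?Mt) (mat_mult S B M) z y = mat_mult S id_mat (mat_mult S B M) z y"
      using o z unfolding orthogonal_mat_def by (intro mat_mult_cong refl) simp
  qed
  also have "\<dots> = mat_mult S (mat_mult S ?Mt A) (mat_mult S B M) x y"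
    using S by (intro mat_mult_cong[OF refl]) (simp add: mat_mult_id_left)
  also have "\<dots> = conj_mat S M (mat_mult S A B) x y"
    unfolding conj_mat_def using S by (simp add: mat_mult_assoc)
  finally show ?thesis by simp
qed

lemma conj_mat_id:
  assumes "finite S" "orthogonal_mat S M" "x \<in> S" "y \<in> S"
  shows "conj_mat S M id_mat x y = id_mat x y"
proof -
  have "conj_mat S M id_mat x y = mat_mult S (transpose_mat M) M x y"
    unfolding conj_mat_def using assms by (intro mat_mult_cong refl) (simp add: mat_mult_id_right)
  then show ?thesis using assms unfolding orthogonal_mat_def by simp
qed

lemma conj_mat_pow:
  assumes S: "finite S" and o: "orthogonal_mat S M"
    and h: "\<And>x y. x \<in> S \<Longrightarrow> y \<in> S \<Longrightarrow> B x y = conj_mat S M A x y"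
  shows "x \<in> S \<Longrightarrow> y \<in> S \<Longrightarrow> mat_pow S B j x y = conj_mat S M (mat_pow S A j) x y"
proof (induction j arbitrary: x y)
  case 0 then show ?case using conj_mat_id[OF S o] by simp
next
  case (Suc j)
  have "mat_pow S B (Suc j) x y = mat_mult S (conj_mat S M A) (conj_mat S M (mat_pow S A j)) x y"
    using Suc h by (simp, intro mat_mult_cong) auto
  also have "\<dots> = conj_mat S M (mat_pow S A (Suc j)) x y"
    using conj_mat_mult[OF S o Suc.prems] by simp
  finally show ?case .
qed

lemma conj_mat_inverse:
  assumes S: "finite S" and o: "orthogonal_mat S M" and B: "\<And>u w. u \<in> S \<Longrightarrow> w \<in> S \<Longrightarrow> B u w = conj_mat S M A u w"
    and u: "u \<in> S" and w: "w \<in> S"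
  shows "A u w = conj_mat S (transpose_mat M) B u w"
proof -
  have "conj_mat S (transpose_mat M) B u w = mat_mult S (mat_mult S M B) (transpose_mat M) u w" unfolding conj_mat_def by (simp add: transpose_transpose_mat)
  also have "\<dots> = mat_mult S (mat_mult S M (conj_mat S M A)) (transpose_mat M) u w"
    using B by (intro mat_mult_cong refl) (simp add: mat_mult_def)
  also have "\<dots> = mat_mult S (mat_mult S (mat_mult S M (transpose_mat M)) A) (mat_mult S M (transpose_mat M)) u w"
    unfolding conj_mat_def using S by (simp add: mat_mult_assoc)
  also have "\<dots> = mat_mult S (mat_mult S id_mat A) id_mat u w"
  proof (rule mat_mult_cong)
    fix z assume z: "z \<in> S"
    show "mat_mult S (mat_mult S M (transpose_mat M)) A u z = mat_mult S id_mat A u z"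
      using o u unfolding orthogonal_mat_def by (intro mat_mult_cong refl) simp
    show "mat_mult S M (transpose_mat M) z w = id_mat z w" using o z w unfolding orthogonal_mat_def by simp
  qed
  also have "\<dots> = A u w" using S u w by (simp add: mat_mult_id_right mat_mult_id_left)
  finally show ?thesis by simp
qed

lemma conj_mat_sym:
  assumes "\<And>a b. A a b = A b a"
  shows "conj_mat S M A u w = conj_mat S M A w u"
  unfolding conj_mat_expand using assms by (subst sum.swap) (simp add: mult_ac)

lemma trace_conj_mat:
  assumes S: "finite S" and o: "orthogonal_mat S M"
  shows "(\<Sum>u\<in>S. conj_mat S M Z u u) = (\<Sum>u\<in>S. Z u u)"
proof -
  have "(\<Sum>u\<in>S. conj_mat S M Z u u) = (\<Sum>u\<in>S. \<Sum>b\<in>S. \<Sum>a\<in>S. M a u * Z a b * M b u)"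
    unfolding conj_mat_def mat_mult_def transpose_mat_def by (simp add: sum_distrib_right)
  also have "\<dots> = (\<Sum>b\<in>S. \<Sum>u\<in>S. \<Sum>a\<in>S. M a u * Z a b * M b u)"
    by (rule sum.swap)
  also have "\<dots> = (\<Sum>b\<in>S. \<Sum>a\<in>S. \<Sum>u\<in>S. M a u * Z a b * M b u)"
    by (rule sum.cong[OF refl], rule sum.swap)
  also have "\<dots> = (\<Sum>b\<in>S. \<Sum>a\<in>S. Z a b * mat_mult S M (transpose_mat M) a b)"
    unfolding mat_mult_def transpose_mat_def by (simp add: sum_distrib_left mult.commute mult.left_commute)
  also have "\<dots> = (\<Sum>b\<in>S. \<Sum>a\<in>S. Z a b * id_mat a b)"
    using o unfolding orthogonal_mat_def by simp
  also have "\<dots> = (\<Sum>b\<in>S. Z b b)"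
  proof (intro sum.cong refl)
    fix b assume "b \<in> S"
    have "(\<Sum>a\<in>S. Z a b * id_mat a b) = (\<Sum>a\<in>S. if a = b then Z a b else 0)"
      by (intro sum.cong refl) (simp add: id_mat_def)
    then show "(\<Sum>a\<in>S. Z a b * id_mat a b) = Z b b" using S \<open>b \<in> S\<close> by simp
  qed
  finally show ?thesis .
qed

lemma mat_pow_nonneg: "(\<And>x y. 0 \<le> T x y) \<Longrightarrow> 0 \<le> mat_pow S T j x y"
proof (induction j arbitrary: x y)
  case 0 then show ?case by (simp add: id_mat_def)
next
  case (Suc j) then show ?case by (simp add: mat_mult_def sum_nonneg)
qed

lemma mat_pow_restrict:
  assumes S: "finite S" and XS: "X \<subseteq> S" and T: "\<And>x z. z \<notin> X \<Longrightarrow> T x z = 0"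
  shows "mat_pow S T j x y = mat_pow X T j x y"
proof (induction j arbitrary: x)
  case 0 then show ?case by simp
next
  case (Suc j)
  have "mat_pow S T (Suc j) x y = (\<Sum>z\<in>S. T x z * mat_pow S T j z y)" by (simp add: mat_mult_def)
  also have "\<dots> = (\<Sum>z\<in>X. T x z * mat_pow S T j z y)"
    using S XS T by (intro sum.mono_neutral_right) auto
  also have "\<dots> = (\<Sum>z\<in>X. T x z * mat_pow X T j z y)" using Suc.IH by simp
  finally show ?case by (simp add: mat_mult_def)
qed

lemma sum_rel_mat: "finite S \<Longrightarrow> (\<Sum>w\<in>S. rel_mat R u w) = real (card {w\<in>S. R u w})"
  unfolding rel_mat_def by (simp add: sum.If_cases Int_def)

section \<open>Spectral consequences of an orthogonal conjugation\<close>

lemma weighted_cauchy_schwarz: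
  fixes w x :: "'b \<Rightarrow> real"
  assumes I: "finite I" and w: "\<And>i. i \<in> I \<Longrightarrow> 0 \<le> w i"
  shows "(\<Sum>i\<in>I. w i * x i)\<^sup>2 \<le> (\<Sum>i\<in>I. w i) * (\<Sum>i\<in>I. w i * (x i)\<^sup>2)"
proof -
  let ?A = "\<Sum>i\<in>I. w i" and ?B = "\<Sum>i\<in>I. w i * (x i)\<^sup>2" and ?C = "\<Sum>i\<in>I. w i * x i"
  have "0 \<le> (\<Sum>i\<in>I. \<Sum>j\<in>I. w i * w j * (x i - x j)\<^sup>2)"
    using w by (intro sum_nonneg) auto
  also have "(\<Sum>i\<in>I. \<Sum>j\<in>I. w i * w j * (x i - x j)\<^sup>2) =
      (\<Sum>i\<in>I. \<Sum>j\<in>I. (w i * (x i)\<^sup>2) * w j) + (\<Sum>i\<in>I. \<Sum>j\<in>I. w i * (w j * (x j)\<^sup>2))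
      - 2 * (\<Sum>i\<in>I. \<Sum>j\<in>I. (w i * x i) * (w j * x j))"
    by (simp add: power2_diff sum.distrib sum_subtractf sum_distrib_left sum_distrib_right algebra_simps)
  also have "(\<Sum>i\<in>I. \<Sum>j\<in>I. (w i * (x i)\<^sup>2) * w j) = ?B * ?A" by (rule sum_product[symmetric])
  also have "(\<Sum>i\<in>I. \<Sum>j\<in>I. w i * (w j * (x j)\<^sup>2)) = ?A * ?B" by (rule sum_product[symmetric])
  also have "(\<Sum>i\<in>I. \<Sum>j\<in>I. (w i * x i) * (w j * x j)) = ?C * ?C" by (rule sum_product[symmetric])
  finally show ?thesis by (simp add: power2_eq_square algebra_simps)
qed

lemma orthogonal_sum_squares:
  assumes S: "finite S" and o: "\<And>a c. a \<in> S \<Longrightarrow> c \<in> S \<Longrightarrow> (\<Sum>u\<in>S. M a u * M c u) = id_mat a c"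
  shows "(\<Sum>u\<in>S. (\<Sum>a\<in>S. M a u * y a)\<^sup>2) = (\<Sum>a\<in>S. (y a)\<^sup>2)"
proof -
  have "(\<Sum>u\<in>S. (\<Sum>a\<in>S. M a u * y a)\<^sup>2) = (\<Sum>u\<in>S. \<Sum>a\<in>S. \<Sum>c\<in>S. (M a u * y a) * (M c u * y c))"
    by (simp add: power2_eq_square sum_product)
  also have "\<dots> = (\<Sum>a\<in>S. \<Sum>u\<in>S. \<Sum>c\<in>S. (M a u * y a) * (M c u * y c))"
    by (rule sum.swap)
  also have "\<dots> = (\<Sum>a\<in>S. \<Sum>c\<in>S. \<Sum>u\<in>S. (M a u * y a) * (M c u * y c))"
    by (rule sum.cong[OF refl], rule sum.swap)
  also have "\<dots> = (\<Sum>a\<in>S. \<Sum>c\<in>S. y a * y c * (\<Sum>u\<in>S. M a u * M c u))"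
    by (simp add: sum_distrib_left algebra_simps)
  also have "\<dots> = (\<Sum>a\<in>S. \<Sum>c\<in>S. if a = c then y a * y c else 0)"
    using o by (intro sum.cong refl) (simp add: id_mat_def)
  also have "\<dots> = (\<Sum>a\<in>S. (y a)\<^sup>2)"
    using S by (simp add: power2_eq_square)
  finally show ?thesis .
qed

text \<open>For a symmetric 0/1 matrix the number of ones is the trace of its square, which
  conjugation preserves.\<close>

lemma sum_conj_mat_zero_one:
  assumes S: "finite S" and o: "orthogonal_mat S M"
    and B: "\<And>u w. u \<in> S \<Longrightarrow> w \<in> S \<Longrightarrow> B u w = conj_mat S M A u w"
    and A01: "\<And>u w. A u w = 0 \<or> A u w = 1" and Asym: "\<And>u w. A u w = A w u"
    and B01: "\<And>u w. B u w = 0 \<or> B u w = 1"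
  shows "(\<Sum>u\<in>S. \<Sum>w\<in>S. B u w) = (\<Sum>u\<in>S. \<Sum>w\<in>S. A u w)"
proof -
  have sq: "B u w * B u w = B u w" "A u w * A u w = A u w" for u w
    using A01[of u w] B01[of u w] by auto
  have Bsym: "B u w = B w u" if "u \<in> S" "w \<in> S" for u w
    using B that conj_mat_sym[of A S M] Asym by metis
  have "(\<Sum>u\<in>S. \<Sum>w\<in>S. B u w) = (\<Sum>u\<in>S. mat_mult S B B u u)"
    unfolding mat_mult_def using Bsym sq by (intro sum.cong refl) auto
  also have "\<dots> = (\<Sum>u\<in>S. conj_mat S M (mat_mult S A A) u u)"
  proof (intro sum.cong refl)
    fix u assume u: "u \<in> S"
    have "mat_mult S B B u u = mat_mult S (conj_mat S M A) (conj_mat S M A) u u"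
      using B u by (intro mat_mult_cong) auto
    then show "mat_mult S B B u u = conj_mat S M (mat_mult S A A) u u"
      using conj_mat_mult[OF S o u u] by simp
  qed
  also have "\<dots> = (\<Sum>u\<in>S. mat_mult S A A u u)" by (rule trace_conj_mat[OF S o])
  also have "\<dots> = (\<Sum>u\<in>S. \<Sum>w\<in>S. A u w)"
    unfolding mat_mult_def using Asym sq by (intro sum.cong refl) (metis (no_types, lifting))
  finally show ?thesis .
qed

lemma sum_sq_row_sums_conj_le:
  assumes S: "finite S" and o: "orthogonal_mat S M"
    and B: "\<And>u w. u \<in> S \<Longrightarrow> w \<in> S \<Longrightarrow> B u w = conj_mat S M A u w"
    and Ann: "\<And>u w. 0 \<le> A u w" and Asym: "\<And>u w. A u w = A w u"
    and Adeg: "\<And>u. u \<in> S \<Longrightarrow> (\<Sum>w\<in>S. A u w) = d"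
  shows "(\<Sum>u\<in>S. (\<Sum>w\<in>S. B u w)\<^sup>2) \<le> d\<^sup>2 * real (card S)"
proof -
  define m where "m b = (\<Sum>w\<in>S. M b w)" for b
  define y where "y a = (\<Sum>b\<in>S. A a b * m b)" for a
  have row: "(\<Sum>w\<in>S. B u w) = (\<Sum>a\<in>S. M a u * y a)" if "u \<in> S" for u
  proof -
    have "(\<Sum>w\<in>S. B u w) = (\<Sum>w\<in>S. \<Sum>b\<in>S. \<Sum>a\<in>S. M a u * A a b * M b w)"
      using B that by (intro sum.cong refl) (simp add: conj_mat_def mat_mult_def transpose_mat_def sum_distrib_right)
    also have "\<dots> = (\<Sum>b\<in>S. \<Sum>w\<in>S. \<Sum>a\<in>S. M a u * A a b * M b w)" by (rule sum.swap)
    also have "\<dots> = (\<Sum>b\<in>S. \<Sum>a\<in>S. \<Sum>w\<in>S. M a u * A a b * M b w)" by (rule sum.cong[OF refl], rule sum.swap)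
    also have "\<dots> = (\<Sum>a\<in>S. \<Sum>b\<in>S. \<Sum>w\<in>S. M a u * A a b * M b w)" by (rule sum.swap)
    also have "\<dots> = (\<Sum>a\<in>S. M a u * y a)"
      unfolding y_def m_def by (simp add: sum_distrib_left mult.assoc)
    finally show ?thesis .
  qed
  have "(\<Sum>u\<in>S. (\<Sum>w\<in>S. B u w)\<^sup>2) = (\<Sum>u\<in>S. (\<Sum>a\<in>S. M a u * y a)\<^sup>2)" using row by simp
  also have "\<dots> = (\<Sum>a\<in>S. (y a)\<^sup>2)" using orthogonal_sum_squares[OF S orthogonal_mat_rows[OF o]] by simp
  also have "\<dots> \<le> (\<Sum>a\<in>S. (\<Sum>b\<in>S. A a b) * (\<Sum>b\<in>S. A a b * (m b)\<^sup>2))"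
    unfolding y_def using Ann by (intro sum_mono weighted_cauchy_schwarz[OF S]) auto
  also have "\<dots> = d * (\<Sum>a\<in>S. \<Sum>b\<in>S. A a b * (m b)\<^sup>2)"
    using Adeg by (simp add: sum_distrib_left)
  also have "(\<Sum>a\<in>S. \<Sum>b\<in>S. A a b * (m b)\<^sup>2) = (\<Sum>b\<in>S. \<Sum>a\<in>S. A a b * (m b)\<^sup>2)"
    by (rule sum.swap)
  also have "\<dots> = (\<Sum>b\<in>S. d * (m b)\<^sup>2)"
    using Adeg Asym by (intro sum.cong refl) (simp add: sum_distrib_right[symmetric])
  also have "\<dots> = d * (\<Sum>w\<in>S. (1::real)\<^sup>2)"
    using orthogonal_sum_squares[OF S, of "\<lambda>w b. M b w" "\<lambda>_. 1"] orthogonal_mat_cols[OF o]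
    unfolding m_def by (simp add: sum_distrib_left[symmetric])
  finally show ?thesis by (simp add: power2_eq_square)
qed

text \<open>The row sums \<open>r\<close> of \<open>B\<close> satisfy \<open>\<Sum>r = d |S|\<close> and \<open>\<Sum>r\<^sup>2 \<le> d\<^sup>2 |S|\<close>, hence \<open>\<Sum>(r - d)\<^sup>2 \<le> 0\<close>.\<close>

lemma conj_row_sums_eq:
  assumes S: "finite S" and o: "orthogonal_mat S M"
    and B: "\<And>u w. u \<in> S \<Longrightarrow> w \<in> S \<Longrightarrow> B u w = conj_mat S M A u w"
    and A01: "\<And>u w. A u w = 0 \<or> A u w = 1" and Asym: "\<And>u w. A u w = A w u"
    and Adeg: "\<And>u. u \<in> S \<Longrightarrow> (\<Sum>w\<in>S. A u w) = d"
    and B01: "\<And>u w. B u w = 0 \<or> B u w = 1"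
    and u: "u \<in> S"
  shows "(\<Sum>w\<in>S. B u w) = d"
proof -
  define r where "r u = (\<Sum>w\<in>S. B u w)" for u
  have sum_r: "(\<Sum>u\<in>S. r u) = d * real (card S)"
    using sum_conj_mat_zero_one[OF S o B A01 Asym B01] Adeg unfolding r_def by simp
  have sq_r: "(\<Sum>u\<in>S. (r u)\<^sup>2) \<le> d\<^sup>2 * real (card S)"
    unfolding r_def using sum_sq_row_sums_conj_le[OF S o B _ Asym Adeg] A01 by (metis order_refl zero_le_one)
  have "(\<Sum>u\<in>S. (r u - d)\<^sup>2) = (\<Sum>u\<in>S. (r u)\<^sup>2) - 2 * d * (\<Sum>u\<in>S. r u) + d\<^sup>2 * real (card S)"
    by (simp add: power2_diff sum.distrib sum_subtractf sum_distrib_left sum_distrib_right algebra_simps)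
  also have "\<dots> \<le> 0" using sum_r sq_r by (simp add: power2_eq_square)
  finally have "(\<Sum>u\<in>S. (r u - d)\<^sup>2) = 0" by (simp add: antisym sum_nonneg)
  then have "(r u - d)\<^sup>2 = 0" using sum_nonneg_eq_0_iff[OF S, of "\<lambda>u. (r u - d)\<^sup>2"] u by simp
  then show ?thesis unfolding r_def by simp
qed

lemma conj_eigenvector:
  assumes S: "finite S" and o: "orthogonal_mat S M"
    and B: "\<And>u w. u \<in> S \<Longrightarrow> w \<in> S \<Longrightarrow> B u w = conj_mat S M A u w"
    and eig: "\<And>u. u \<in> S \<Longrightarrow> (\<Sum>w\<in>S. A u w * e w) = \<mu> * e u"
    and u: "u \<in> S"
  shows "(\<Sum>w\<in>S. B u w * (\<Sum>a\<in>S. M a w * e a)) = \<mu> * (\<Sum>a\<in>S. M a u * e a)"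
proof -
  define E where "E a (y::'a) = e a" for a y
  have z: "(\<Sum>a\<in>S. M a w * e a) = mat_mult S (transpose_mat M) E w u" for w
    unfolding mat_mult_def transpose_mat_def E_def ..
  have AE: "mat_mult S A E a u = \<mu> * E a u" if "a \<in> S" for a
    using eig[OF that] unfolding mat_mult_def E_def .
  have "(\<Sum>w\<in>S. B u w * (\<Sum>a\<in>S. M a w * e a)) = mat_mult S (conj_mat S M A) (mat_mult S (transpose_mat M) E) u u"
    unfolding z mat_mult_def[of S "conj_mat S M A"] using B u by (intro sum.cong refl) auto
  also have "\<dots> = mat_mult S (mat_mult S (transpose_mat M) A) (mat_mult S (mat_mult S M (transpose_mat M)) E) u u"
    unfolding conj_mat_def using S by (simp add: mat_mult_assoc)
  also have "\<dots> = mat_mult S (mat_mult S (transpose_mat M) A) (mat_mult S id_mat E) u u"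
  proof (rule mat_mult_cong[OF refl])
    fix w assume "w \<in> S"
    show "mat_mult S (mat_mult S M (transpose_mat M)) E w u = mat_mult S id_mat E w u"
      using o \<open>w \<in> S\<close> unfolding orthogonal_mat_def by (intro mat_mult_cong refl) simp
  qed
  also have "\<dots> = mat_mult S (mat_mult S (transpose_mat M) A) E u u"
    using S by (intro mat_mult_cong[OF refl]) (simp add: mat_mult_id_left)
  also have "\<dots> = mat_mult S (transpose_mat M) (mat_mult S A E) u u"
    using S by (simp add: mat_mult_assoc)
  also have "\<dots> = mat_mult S (transpose_mat M) (\<lambda>a y. \<mu> * E a y) u u"
    using AE by (intro mat_mult_cong[OF refl]) auto
  also have "\<dots> = \<mu> * (\<Sum>a\<in>S. M a u * e a)"
    unfolding mat_mult_def transpose_mat_def E_def by (simp add: sum_distrib_left mult.left_commute)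
  finally show ?thesis .
qed

text \<open>A \<open>d\<close>-eigenvector of a nonnegative symmetric matrix with all row sums \<open>d\<close> is constant
  along its support graph, because \<open>\<Sum>u w. B u w (z u - z w)\<^sup>2 = 2 (d \<parallel>z\<parallel>\<^sup>2 - z\<^sup>T B z) = 0\<close>.\<close>

lemma eigenvector_const_on_edges:
  fixes B :: "'a \<Rightarrow> 'a \<Rightarrow> real" and z :: "'a \<Rightarrow> real"
  assumes S: "finite S" and Bnn: "\<And>u w. 0 \<le> B u w" and Bsym: "\<And>u w. B u w = B w u"
    and Bdeg: "\<And>u. u \<in> S \<Longrightarrow> (\<Sum>w\<in>S. B u w) = d"
    and eig: "\<And>u. u \<in> S \<Longrightarrow> (\<Sum>w\<in>S. B u w * z w) = d * z u"
    and u: "u \<in> S" and w: "w \<in> S" and uw: "0 < B u w"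
  shows "z u = z w"
proof -
  have "(\<Sum>u\<in>S. \<Sum>w\<in>S. B u w * (z u - z w)\<^sup>2) =
      (\<Sum>u\<in>S. (z u)\<^sup>2 * (\<Sum>w\<in>S. B u w)) + (\<Sum>u\<in>S. \<Sum>w\<in>S. B u w * (z w)\<^sup>2)
      - 2 * (\<Sum>u\<in>S. z u * (\<Sum>w\<in>S. B u w * z w))"
    by (simp add: power2_diff sum.distrib sum_subtractf sum_distrib_left sum_distrib_right algebra_simps)
  also have "(\<Sum>u\<in>S. \<Sum>w\<in>S. B u w * (z w)\<^sup>2) = (\<Sum>w\<in>S. \<Sum>u\<in>S. B u w * (z w)\<^sup>2)"
    by (rule sum.swap)
  also have "\<dots> = (\<Sum>w\<in>S. (z w)\<^sup>2 * (\<Sum>u\<in>S. B w u))"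
    using Bsym by (simp add: sum_distrib_left sum_distrib_right mult.commute)
  also have "(\<Sum>u\<in>S. z u * (\<Sum>w\<in>S. B u w * z w)) = (\<Sum>u\<in>S. d * (z u)\<^sup>2)"
    using eig by (intro sum.cong refl) (simp add: power2_eq_square)
  finally have "(\<Sum>u\<in>S. \<Sum>w\<in>S. B u w * (z u - z w)\<^sup>2) = 0"
    using Bdeg by (simp add: sum_distrib_left[symmetric] mult.commute)
  then have "(\<Sum>w\<in>S. B u w * (z u - z w)\<^sup>2) = 0"
    using sum_nonneg_eq_0_iff[OF S, of "\<lambda>u. \<Sum>w\<in>S. B u w * (z u - z w)\<^sup>2"] Bnn u
    by (simp add: sum_nonneg)
  then have "B u w * (z u - z w)\<^sup>2 = 0"
    using sum_nonneg_eq_0_iff[OF S, of "\<lambda>w. B u w * (z u - z w)\<^sup>2"] Bnn w by force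
  then show ?thesis using uw by simp
qed

text \<open>The indicator of \<open>C\<close> is a \<open>d\<close>-eigenvector of \<open>A\<close>; conjugating it gives a \<open>d\<close>-eigenvector
  \<open>z\<close> of \<open>B\<close> with \<open>\<parallel>z\<parallel>\<^sup>2 = card C\<close> and \<open>z v = \<sigma>\<close>, hence \<open>z = \<sigma>\<close> on the whole \<open>B\<close>-component of \<open>v\<close>.\<close>

lemma card_component_le:
  assumes S: "finite S" and o: "orthogonal_mat S M"
    and B: "\<And>u w. u \<in> S \<Longrightarrow> w \<in> S \<Longrightarrow> B u w = conj_mat S M A u w"
    and Bnn: "\<And>u w. 0 \<le> B u w" and Bsym: "\<And>u w. B u w = B w u"
    and Bdeg: "\<And>u. u \<in> S \<Longrightarrow> (\<Sum>w\<in>S. B u w) = d"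
    and C: "C \<subseteq> S" and Ceig: "\<And>u. u \<in> S \<Longrightarrow> (\<Sum>w\<in>C. A u w) = (if u \<in> C then d else 0)"
    and v: "v \<in> C" and Mv: "\<And>a. a \<in> S \<Longrightarrow> M a v = (if a = v then \<sigma> else 0)" and sg: "\<sigma> * \<sigma> = 1"
    and C': "C' \<subseteq> S" and conn: "\<And>c. c \<in> C' \<Longrightarrow> (v, c) \<in> {(x, y). x \<in> S \<and> y \<in> S \<and> 0 < B x y}\<^sup>*"
  shows "card C' \<le> card C"
proof -
  define e where "e a = (if a \<in> C then (1::real) else 0)" for a
  define z where "z u = (\<Sum>a\<in>S. M a u * e a)" for u
  have Ae: "(\<Sum>w\<in>S. A u w * e w) = d * e u" if "u \<in> S" for u
  proof -
    have "(\<Sum>w\<in>S. A u w * e w) = (\<Sum>w\<in>S. if w \<in> C then A u w else 0)"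
      unfolding e_def by (intro sum.cong) auto
    also have "\<dots> = (\<Sum>w\<in>C. A u w)" using S C by (simp add: sum.If_cases Int_absorb1)
    finally have "(\<Sum>w\<in>S. A u w * e w) = (\<Sum>w\<in>C. A u w)" .
    then show ?thesis using Ceig[OF that] unfolding e_def by simp
  qed
  have Bz: "(\<Sum>w\<in>S. B u w * z w) = d * z u" if "u \<in> S" for u
    unfolding z_def by (rule conj_eigenvector[OF S o B Ae that])
  have zsq: "(\<Sum>u\<in>S. (z u)\<^sup>2) = real (card C)"
  proof -
    have "(\<Sum>u\<in>S. (z u)\<^sup>2) = (\<Sum>a\<in>S. (e a)\<^sup>2)"
      unfolding z_def by (rule orthogonal_sum_squares[OF S orthogonal_mat_rows[OF o]])
    also have "\<dots> = (\<Sum>a\<in>S. if a \<in> C then 1 else 0)" unfolding e_def by (intro sum.cong) auto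
    also have "\<dots> = real (card C)" using S C by (simp add: sum.If_cases Int_absorb1)
    finally show ?thesis .
  qed
  have zv: "z v = \<sigma>"
  proof -
    have "z v = (\<Sum>a\<in>S. if a = v then \<sigma> else 0)"
      unfolding z_def using Mv v unfolding e_def by (intro sum.cong refl) auto
    then show ?thesis using S v C by auto
  qed
  have zc: "z c = \<sigma>" if "c \<in> C'" for c
    using conn[OF that]
  proof (induction rule: rtrancl_induct)
    case base then show ?case using zv .
  next
    case (step y c) then show ?case using eigenvector_const_on_edges[OF S Bnn Bsym Bdeg Bz] by auto
  qed
  have "real (card C') = (\<Sum>c\<in>C'. (z c)\<^sup>2)" using zc sg by (simp add: power2_eq_square)
  also have "\<dots> \<le> (\<Sum>u\<in>S. (z u)\<^sup>2)" using C' S by (intro sum_mono2) auto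
  finally show ?thesis using zsq by simp
qed

section \<open>Counting walks in a path\<close>

definition path_adj :: "nat \<Rightarrow> nat \<Rightarrow> nat \<Rightarrow> real" where
  "path_adj n i k = (if (k = Suc i \<or> i = Suc k) \<and> i < n \<and> k < n then 1 else 0)"

definition path_walks :: "nat \<Rightarrow> nat \<Rightarrow> nat \<Rightarrow> nat \<Rightarrow> real" where
  "path_walks n j i k = mat_pow {..<n} (path_adj n) j i k"

definition end_walks :: "nat \<Rightarrow> nat \<Rightarrow> real" where
  "end_walks n j = path_walks n j 0 (n - 1)"

definition path_dist :: "nat \<Rightarrow> nat \<Rightarrow> nat" where
  "path_dist i k = (if i \<le> k then k - i else i - k)"

lemma path_adj_sum:
  assumes "i < n"
  shows "(\<Sum>z<n. path_adj n i z * f z) = (if 0 < i then f (i - 1) else 0) + (if Suc i < n then f (Suc i) else 0)"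
proof -
  have "(\<Sum>z<n. path_adj n i z * f z) = (\<Sum>z<n. (if 0 < i \<and> z = i - 1 then f z else 0) + (if Suc i < n \<and> z = Suc i then f z else 0))"
    using assms by (intro sum.cong) (auto simp: path_adj_def)
  also have "\<dots> = (if 0 < i then f (i - 1) else 0) + (if Suc i < n then f (Suc i) else 0)"
    using assms by (simp add: sum.distrib sum.If_cases)
  finally show ?thesis .
qed

lemma path_walks_Suc: "i < n \<Longrightarrow> path_walks n (Suc j) i k = (if 0 < i then path_walks n j (i - 1) k else 0) + (if Suc i < n then path_walks n j (Suc i) k else 0)"
  unfolding path_walks_def by (simp add: mat_mult_def path_adj_sum lessThan_def[symmetric])

lemma path_walks_dist:
  "i < n \<Longrightarrow> k < n \<Longrightarrow> (j < path_dist i k \<longrightarrow> path_walks n j i k = 0) \<and> (j = path_dist i k \<longrightarrow> path_walks n j i k = 1)"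
proof (induction j arbitrary: i)
  case 0 then show ?case by (auto simp: path_walks_def id_mat_def path_dist_def)
next
  case (Suc j)
  have r: "path_walks n (Suc j) i k = (if 0 < i then path_walks n j (i - 1) k else 0) + (if Suc i < n then path_walks n j (Suc i) k else 0)"
    using path_walks_Suc Suc.prems by simp
  have A: "0 < i \<Longrightarrow> (j < path_dist (i - 1) k \<longrightarrow> path_walks n j (i - 1) k = 0) \<and> (j = path_dist (i - 1) k \<longrightarrow> path_walks n j (i - 1) k = 1)"
    using Suc.IH[of "i - 1"] Suc.prems by simp
  have B: "Suc i < n \<Longrightarrow> (j < path_dist (Suc i) k \<longrightarrow> path_walks n j (Suc i) k = 0) \<and> (j = path_dist (Suc i) k \<longrightarrow> path_walks n j (Suc i) k = 1)"
    using Suc.IH[of "Suc i"] Suc.prems by simp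
  show ?case
  proof (intro conjI impI)
    assume "Suc j < path_dist i k"
    then show "path_walks n (Suc j) i k = 0" using r A B by (auto simp: path_dist_def split: if_splits)
  next
    assume h: "Suc j = path_dist i k"
    show "path_walks n (Suc j) i k = 1"
    proof (cases "i < k")
      case True
      then have "Suc i < n" using Suc.prems by simp
      moreover have "0 < i \<Longrightarrow> j < path_dist (i - 1) k" using h True by (auto simp: path_dist_def)
      moreover have "j = path_dist (Suc i) k" using h True by (auto simp: path_dist_def)
      ultimately show ?thesis using r A B by auto
    next
      case False
      then have "k < i" using h by (auto simp: path_dist_def split: if_splits)
      then have "0 < i" by simp
      moreover have "Suc i < n \<Longrightarrow> j < path_dist (Suc i) k" using h \<open>k < i\<close> by (auto simp: path_dist_def)
      moreover have "j = path_dist (i - 1) k" using h \<open>k < i\<close> by (auto simp: path_dist_def)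
      ultimately show ?thesis using r A B by auto
    qed
  qed
qed

lemma end_walks_short: "Suc j < n \<Longrightarrow> end_walks n j = 0"
  using path_walks_dist[of 0 n "n - 1" j] unfolding end_walks_def path_dist_def by auto

lemma end_walks_len: "0 < n \<Longrightarrow> end_walks n (n - 1) = 1"
  using path_walks_dist[of 0 n "n - 1" "n - 1"] unfolding end_walks_def path_dist_def by auto

lemma sum_group_by_value:
  fixes lg :: "'b \<Rightarrow> nat"
  assumes "finite P" "\<And>p. p \<in> P \<Longrightarrow> lg p < L"
  shows "(\<Sum>p\<in>P. h (lg p)) = (\<Sum>m<L. real (card {p\<in>P. lg p = m}) * h m)"
  using sum.group[of P "{..<L}" lg "\<lambda>p. h (lg p)"] assms by (simp add: image_subset_iff)

lemma sum_end_walks_by_length: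
  fixes f :: "'b \<Rightarrow> nat"
  assumes Q: "finite Q" and pos: "\<And>p. p \<in> Q \<Longrightarrow> 0 < f p"
  shows "(\<Sum>p\<in>Q. end_walks (f p) l) =
    (\<Sum>m<Suc l. real (card {p\<in>Q. f p = m}) * end_walks m l) + real (card {p\<in>Q. f p = Suc l})"
proof -
  let ?short = "{p\<in>Q. f p < Suc l}" and ?long = "{p\<in>Q. \<not> f p < Suc l}"
  have "(\<Sum>p\<in>Q. end_walks (f p) l) = (\<Sum>p\<in>?short. end_walks (f p) l) + (\<Sum>p\<in>?long. end_walks (f p) l)"
    using Q by (subst sum.union_disjoint[symmetric]) (auto intro: sum.cong)
  also have "(\<Sum>p\<in>?short. end_walks (f p) l) = (\<Sum>m<Suc l. real (card {p\<in>?short. f p = m}) * end_walks m l)"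
    using Q by (intro sum_group_by_value) auto
  also have "\<dots> = (\<Sum>m<Suc l. real (card {p\<in>Q. f p = m}) * end_walks m l)"
  proof (intro sum.cong refl)
    fix m assume "m \<in> {..<Suc l}"
    then have "{p\<in>?short. f p = m} = {p\<in>Q. f p = m}" by auto
    then show "real (card {p\<in>?short. f p = m}) * end_walks m l = real (card {p\<in>Q. f p = m}) * end_walks m l"
      by simp
  qed
  also have "(\<Sum>p\<in>?long. end_walks (f p) l) = (\<Sum>p\<in>?long. if f p = Suc l then 1 else 0)"
    using end_walks_short end_walks_len[of "Suc l"] by (intro sum.cong refl) auto
  also have "\<dots> = (\<Sum>p\<in>{p\<in>Q. f p = Suc l}. (1::real))"
    using Q by (intro sum.mono_neutral_cong_right) auto
  finally show ?thesis by simp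
qed

text \<open>Since \<open>end_walks m j\<close> vanishes for \<open>j < m - 1\<close> and is \<open>1\<close> for \<open>j = m - 1\<close>, the sums below
  form a unitriangular system in the length distribution.\<close>

lemma card_fibres_eq_if_end_walk_sums_eq:
  fixes f g :: "'b \<Rightarrow> nat"
  assumes P: "finite P" and P': "finite P'"
    and pos: "\<And>p. p \<in> P \<Longrightarrow> 0 < f p" and pos': "\<And>p. p \<in> P' \<Longrightarrow> 0 < g p"
    and eq: "\<And>j. (\<Sum>p\<in>P. end_walks (f p) j) = (\<Sum>p\<in>P'. end_walks (g p) j)"
  shows "card {p\<in>P. f p = l} = card {p\<in>P'. g p = l}"
proof (induction l rule: less_induct)
  case (less l)
  show ?case
  proof (cases l)
    case 0
    have "{p\<in>P. f p = l} = {}" "{p\<in>P'. g p = l} = {}" using pos pos' 0 by fastforce+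
    then show ?thesis by (simp only: card.empty)
  next
    case (Suc l0)
    have "(\<Sum>m<Suc l0. real (card {p\<in>P. f p = m}) * end_walks m l0) =
        (\<Sum>m<Suc l0. real (card {p\<in>P'. g p = m}) * end_walks m l0)"
      using less.IH Suc by (intro sum.cong refl) auto
    then have "real (card {p\<in>P. f p = l}) = real (card {p\<in>P'. g p = l})"
      using eq[of l0] sum_end_walks_by_length[OF P pos] sum_end_walks_by_length[OF P' pos'] Suc by simp
    then show ?thesis by simp
  qed
qed

section \<open>Neighbourhood graphs that are disjoint unions of cycles\<close>

text \<open>The neighbourhood graph \<open>G\<^sub>X\<close> on \<open>V = X \<union> N\<close>, where \<open>N = N(X) - X\<close>: it is 2-regular and \<open>N\<close> is
  independent. A \<^emph>\<open>port\<close> \<open>(v, a)\<close> is an edge from \<open>v \<in> N\<close> into \<open>X\<close>; the non-backtracking walk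
  through it stays in \<open>X\<close> until it reaches \<open>N\<close> again after \<open>seg_len v a\<close> steps, and the vertices
  it passes in \<open>X\<close> form the \<^emph>\<open>segment\<close> \<open>segment v a\<close>, a component of \<open>G\<^sub>X[X]\<close>.\<close>

locale cycle_nbhd =
  fixes V X N :: "'a set" and adj :: "'a \<Rightarrow> 'a \<Rightarrow> bool"
  assumes finite_V: "finite V" and V_eq: "V = X \<union> N" and X_N_disjoint: "X \<inter> N = {}"
    and adj_sym: "adj u w \<Longrightarrow> adj w u" and adj_irrefl: "\<not> adj u u"
    and adj_in_V: "adj u w \<Longrightarrow> u \<in> V"
    and degree_two: "u \<in> V \<Longrightarrow> card {w. adj u w} = 2"
    and N_indep: "u \<in> N \<Longrightarrow> w \<in> N \<Longrightarrow> \<not> adj u w"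
begin

lemma adj_in_V': "adj u w \<Longrightarrow> w \<in> V" using adj_in_V adj_sym by blast

lemma finite_X: "finite X" using finite_V V_eq by auto

definition other_nbr :: "'a \<Rightarrow> 'a \<Rightarrow> 'a" where
  "other_nbr u p = (SOME w. adj u w \<and> w \<noteq> p)"

lemma nbrs_two:
  assumes "adj u p" shows "\<exists>q. q \<noteq> p \<and> {w. adj u w} = {p, q}"
proof -
  have "card {w. adj u w} = 2" using degree_two adj_in_V assms by blast
  then obtain a b where ab: "a \<noteq> b" "{w. adj u w} = {a, b}" by (auto simp: card_2_iff)
  then show ?thesis using assms by (metis insert_commute mem_Collect_eq insertE empty_iff)
qed

lemma other_nbr_adj: assumes "adj u p" shows "adj u (other_nbr u p) \<and> other_nbr u p \<noteq> p"
proof -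
  obtain q where "q \<noteq> p" "{w. adj u w} = {p, q}" using nbrs_two[OF assms] by blast
  then have "\<exists>w. adj u w \<and> w \<noteq> p" by auto
  then show ?thesis unfolding other_nbr_def by (rule someI_ex)
qed

lemma other_nbr_unique: assumes "adj u p" "adj u w" "w \<noteq> p" shows "w = other_nbr u p"
proof -
  obtain q where q: "q \<noteq> p" "{w. adj u w} = {p, q}" using nbrs_two[OF assms(1)] by blast
  have "w = q" using assms q by auto
  moreover have "other_nbr u p = q" using other_nbr_adj[OF assms(1)] q by auto
  ultimately show ?thesis by simp
qed

lemma nbrs_eq_other: assumes "adj u p" shows "{w. adj u w} = {p, other_nbr u p}"
  using other_nbr_adj[OF assms] other_nbr_unique[OF assms] assms by auto

lemma nbr_exists: "u \<in> V \<Longrightarrow> \<exists>w. adj u w"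
  using degree_two[of u] by (metis card.empty empty_Collect_eq zero_neq_numeral)

fun walk :: "'a \<Rightarrow> 'a \<Rightarrow> nat \<Rightarrow> 'a" where
  "walk v a 0 = v"
| "walk v a (Suc 0) = a"
| "walk v a (Suc (Suc k)) = other_nbr (walk v a (Suc k)) (walk v a k)"

lemma walk_adj: assumes "adj v a" shows "adj (walk v a k) (walk v a (Suc k))"
proof (induction k)
  case 0 then show ?case using assms by simp
next
  case (Suc k)
  then show ?case using other_nbr_adj[of "walk v a (Suc k)" "walk v a k"] adj_sym
    by simp
qed

lemma walk_no_backtrack: assumes "adj v a" shows "walk v a (Suc (Suc k)) \<noteq> walk v a k"
  using other_nbr_adj[of "walk v a (Suc k)" "walk v a k"] adj_sym walk_adj[OF assms, of k]
  by simp

lemma walk_in_V: assumes "adj v a" shows "walk v a k \<in> V"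
  using walk_adj[OF assms, of k] adj_in_V by blast

lemma walk_nbrs: assumes "adj v a" "0 < i"
  shows "{w. adj (walk v a i) w} = {walk v a (i - 1), walk v a (Suc i)}"
proof -
  obtain j where i: "i = Suc j" using assms(2) by (cases i) auto
  have "adj (walk v a i) (walk v a j)" using walk_adj[OF assms(1), of j] adj_sym i by simp
  then have "{w. adj (walk v a i) w} = {walk v a j, other_nbr (walk v a i) (walk v a j)}"
    by (rule nbrs_eq_other)
  then show ?thesis using i by simp
qed

lemma walk_inj:
  assumes va: "adj v a" and vN: "v \<in> N" and X: "\<And>i. 1 \<le> i \<Longrightarrow> i \<le> K \<Longrightarrow> walk v a i \<in> X"
  shows "inj_on (walk v a) {0..K}"
proof -
  have "\<forall>i<j. walk v a i \<noteq> walk v a j" if "j \<le> K" for j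
    using that
  proof (induction j rule: less_induct)
    case (less j)
    show ?case
    proof (intro allI impI)
      fix i assume ij: "i < j"
      show "walk v a i \<noteq> walk v a j"
      proof
        assume eq: "walk v a i = walk v a j"
        have jX: "walk v a j \<in> X" using X[of j] ij less.prems by simp
        show False
        proof (cases "i = 0")
          case True
          then show False using eq jX vN X_N_disjoint by auto
        next
          case False
          obtain j' where j': "j = Suc j'" using ij by (cases j) auto
          have "adj (walk v a i) (walk v a j')" using walk_adj[OF va, of j'] eq adj_sym j' by simp
          then have "walk v a j' = walk v a (i - 1) \<or> walk v a j' = walk v a (Suc i)"
            using walk_nbrs[OF va, of i] False by auto
          then show False
          proof
            assume h: "walk v a j' = walk v a (i - 1)"
            have "i - 1 < j'" using False ij j' by simp
            then show False using less.IH[of j'] h j' less.prems by auto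
          next
            assume h: "walk v a j' = walk v a (Suc i)"
            consider "Suc i < j'" | "Suc i = j'" | "Suc i = j" using ij j' by linarith
            then show False
            proof cases
              case 1 then show ?thesis using less.IH[of j'] h j' less.prems by auto
            next
              case 2 then show ?thesis using walk_no_backtrack[OF va, of i] eq j' by simp
            next
              case 3 then show ?thesis using walk_adj[OF va, of i] eq adj_irrefl by simp
            qed
          qed
        qed
      qed
    qed
  qed
  then show ?thesis unfolding inj_on_def
    by (metis atLeastAtMost_iff linorder_neqE_nat)
qed

definition port :: "'a \<Rightarrow> 'a \<Rightarrow> bool" where
  "port v a \<longleftrightarrow> v \<in> N \<and> adj v a"

lemma port_X: "port v a \<Longrightarrow> a \<in> X"
  unfolding port_def using adj_in_V' V_eq N_indep by blast

lemma walk_returns_to_N: assumes "port v a" shows "\<exists>k. 0 < k \<and> walk v a k \<in> N"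
proof (rule ccontr)
  assume nh: "\<not> ?thesis"
  have allX: "walk v a k \<in> X" if "0 < k" for k
  proof -
    have "walk v a k \<notin> N" using nh that by blast
    then show ?thesis using walk_in_V[of v a k] assms V_eq unfolding port_def by auto
  qed
  let ?K = "Suc (card X)"
  have "inj_on (walk v a) {0..?K}"
    using walk_inj[of v a ?K] assms allX unfolding port_def by auto
  then have inj: "inj_on (walk v a) {1..?K}" by (rule inj_on_subset) auto
  have "walk v a ` {1..?K} \<subseteq> X" using allX by auto
  then have "card (walk v a ` {1..?K}) \<le> card X" using finite_X by (simp add: card_mono)
  then show False using card_image[OF inj] by simp
qed

definition seg_len :: "'a \<Rightarrow> 'a \<Rightarrow> nat" where
  "seg_len v a = (LEAST k. 0 < k \<and> walk v a k \<in> N)"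

lemma seg_len_props:
  assumes "port v a"
  shows "0 < seg_len v a" "walk v a (seg_len v a) \<in> N" "\<And>k. 0 < k \<Longrightarrow> k < seg_len v a \<Longrightarrow> walk v a k \<in> X"
    "2 \<le> seg_len v a"
proof -
  obtain k where k: "0 < k \<and> walk v a k \<in> N" using walk_returns_to_N[OF assms] by blast
  show h1: "0 < seg_len v a" "walk v a (seg_len v a) \<in> N"
    using LeastI[of "\<lambda>k. 0 < k \<and> walk v a k \<in> N", OF k] unfolding seg_len_def by auto
  show h3: "walk v a k \<in> X" if "0 < k" "k < seg_len v a" for k
  proof -
    have "\<not> (0 < k \<and> walk v a k \<in> N)" using not_less_Least[of k] that unfolding seg_len_def by blast
    then show ?thesis using walk_in_V[of v a k] assms that V_eq unfolding port_def by auto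
  qed
  show "2 \<le> seg_len v a"
  proof (rule ccontr)
    assume "\<not> 2 \<le> seg_len v a"
    then have "seg_len v a = 1" using h1 by simp
    then show False using h1 port_X[OF assms] X_N_disjoint by auto
  qed
qed

lemma inj_on_walk_seg: assumes "port v a" shows "inj_on (walk v a) {0..seg_len v a - 1}"
  using walk_inj[of v a "seg_len v a - 1"] assms seg_len_props[OF assms] unfolding port_def by auto

definition seg_end :: "'a \<Rightarrow> 'a \<Rightarrow> 'a" where "seg_end v a = walk v a (seg_len v a)"
definition segment :: "'a \<Rightarrow> 'a \<Rightarrow> 'a set" where "segment v a = walk v a ` {1..<seg_len v a}"
definition seg_last :: "'a \<Rightarrow> 'a \<Rightarrow> 'a" where "seg_last v a = walk v a (seg_len v a - 1)"

lemma segment_subset_X: "port v a \<Longrightarrow> segment v a \<subseteq> X"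
  unfolding segment_def using seg_len_props by auto

lemma port_in_segment: "port v a \<Longrightarrow> a \<in> segment v a"
  unfolding segment_def using seg_len_props(4)[of v a] by (auto intro!: image_eqI[of _ _ 1])

lemma inj_on_segment: "port v a \<Longrightarrow> inj_on (walk v a) {1..<seg_len v a}"
  using inj_on_walk_seg by (rule inj_on_subset) auto

lemma card_segment: "port v a \<Longrightarrow> card (segment v a) = seg_len v a - 1"
  unfolding segment_def using inj_on_segment card_image by fastforce

lemma adj_in_segment:
  assumes p: "port v a" and i: "0 < i" "i < seg_len v a" and m: "0 < m" "m < seg_len v a"
  shows "adj (walk v a i) (walk v a m) \<longleftrightarrow> (m = Suc i \<or> i = Suc m)"
proof -
  have inj: "inj_on (walk v a) {0..seg_len v a - 1}" by (rule inj_on_walk_seg[OF p])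
  have N: "walk v a (seg_len v a) \<in> N" using seg_len_props[OF p] by simp
  have mX: "walk v a m \<in> X" using seg_len_props(3)[OF p] m by simp
  have "adj (walk v a i) (walk v a m) \<longleftrightarrow> walk v a m \<in> {walk v a (i - 1), walk v a (Suc i)}"
    using walk_nbrs[of v a i] p i unfolding port_def by auto
  also have "\<dots> \<longleftrightarrow> (m = Suc i \<or> i = Suc m)"
  proof
    assume "walk v a m \<in> {walk v a (i - 1), walk v a (Suc i)}"
    then have "walk v a m = walk v a (i - 1) \<or> walk v a m = walk v a (Suc i)" by simp
    then show "m = Suc i \<or> i = Suc m"
    proof
      assume "walk v a m = walk v a (i - 1)"
      then have "m = i - 1" using inj_onD[OF inj] i m by auto
      then show ?thesis using m i by simp
    next
      assume h: "walk v a m = walk v a (Suc i)"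
      show ?thesis
      proof (cases "Suc i = seg_len v a")
        case True then show ?thesis using h N mX X_N_disjoint by auto
      next
        case False
        then have "m = Suc i" using inj_onD[OF inj h] i m by auto
        then show ?thesis by simp
      qed
    qed
  next
    assume "m = Suc i \<or> i = Suc m"
    then show "walk v a m \<in> {walk v a (i - 1), walk v a (Suc i)}" by auto
  qed
  finally show ?thesis .
qed

lemma nbr_in_segment:
  assumes p: "port v a" and i: "0 < i" "i < seg_len v a" and u: "adj (walk v a i) u"
  shows "u = walk v a (i - 1) \<or> u = walk v a (Suc i)"
  using walk_nbrs[of v a i] p i u unfolding port_def by auto

lemma segment_closed:
  assumes p: "port v a" and x: "x \<in> segment v a" and xz: "adj x z" and z: "z \<in> X"
  shows "z \<in> segment v a"
proof -
  obtain i where i: "0 < i" "i < seg_len v a" "x = walk v a i" using x unfolding segment_def by (auto simp: Suc_le_eq)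
  have "z = walk v a (i - 1) \<or> z = walk v a (Suc i)" using nbr_in_segment[OF p i(1,2)] xz i by simp
  then show ?thesis
  proof
    assume h: "z = walk v a (i - 1)"
    have "i - 1 \<noteq> 0" using h z p X_N_disjoint unfolding port_def by auto
    then show ?thesis using h i unfolding segment_def by (auto intro!: image_eqI[of _ _ "i - 1"])
  next
    assume h: "z = walk v a (Suc i)"
    have "Suc i \<noteq> seg_len v a" using h z seg_len_props(2)[OF p] X_N_disjoint by auto
    then show ?thesis using h i unfolding segment_def by (auto intro!: image_eqI[of _ _ "Suc i"])
  qed
qed

lemma N_nbr_of_segment:
  assumes p: "port v a" and i: "0 < i" "i < seg_len v a" and u: "adj (walk v a i) u" and uN: "u \<in> N"
  shows "(i = 1 \<and> u = v) \<or> (i = seg_len v a - 1 \<and> u = seg_end v a)"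
proof -
  have "u = walk v a (i - 1) \<or> u = walk v a (Suc i)" using nbr_in_segment[OF p i u] .
  then show ?thesis
  proof
    assume h: "u = walk v a (i - 1)"
    have "i - 1 = 0"
    proof (rule ccontr)
      assume "i - 1 \<noteq> 0"
      then have "walk v a (i - 1) \<in> X" using seg_len_props(3)[OF p, of "i - 1"] i by simp
      then show False using h uN X_N_disjoint by auto
    qed
    then show ?thesis using h i by simp
  next
    assume h: "u = walk v a (Suc i)"
    have "Suc i = seg_len v a"
    proof (rule ccontr)
      assume "Suc i \<noteq> seg_len v a"
      then have "walk v a (Suc i) \<in> X" using seg_len_props(3)[OF p, of "Suc i"] i by simp
      then show False using h uN X_N_disjoint by auto
    qed
    then show ?thesis using h i unfolding seg_end_def by auto
  qed
qed

lemma N_nbr_of_segment_conv: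
  assumes p: "port v a" and i: "0 < i" "i < seg_len v a"
  shows "(i = 1 \<and> u = v) \<or> (i = seg_len v a - 1 \<and> u = seg_end v a) \<Longrightarrow> adj (walk v a i) u"
  using walk_adj[of v a 0] walk_adj[of v a "seg_len v a - 1"] p i adj_sym unfolding port_def seg_end_def
  by (auto simp: Suc_diff_1)

lemma port_reverse: assumes p: "port v a" shows "port (seg_end v a) (seg_last v a)"
proof -
  have "adj (walk v a (seg_len v a - 1)) (walk v a (seg_len v a))"
    using walk_adj[of v a "seg_len v a - 1"] p seg_len_props(1)[OF p] unfolding port_def by simp
  then show ?thesis using seg_len_props(2)[OF p] adj_sym unfolding port_def seg_end_def seg_last_def by blast
qed

lemma walk_reverse:
  assumes p: "port v a"
  shows "k \<le> seg_len v a \<Longrightarrow> walk (seg_end v a) (seg_last v a) k = walk v a (seg_len v a - k)"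
proof (induction k rule: less_induct)
  case (less k)
  show ?case
  proof (cases k)
    case 0 then show ?thesis by (simp add: seg_end_def)
  next
    case (Suc k1)
    show ?thesis
    proof (cases k1)
      case 0 then show ?thesis using Suc by (simp add: seg_last_def)
    next
      case (Suc m)
      have k: "k = Suc (Suc m)" using \<open>k = Suc k1\<close> Suc by simp
      define i where "i = seg_len v a - Suc m"
      have i0: "0 < i" using less.prems k unfolding i_def by simp
      have ih1: "walk (seg_end v a) (seg_last v a) (Suc m) = walk v a i"
        using less.IH[of "Suc m"] less.prems k unfolding i_def by simp
      have ih2: "walk (seg_end v a) (seg_last v a) m = walk v a (Suc i)"
        using less.IH[of m] less.prems k unfolding i_def by (simp add: Suc_diff_Suc)
      have va: "adj v a" using p unfolding port_def by simp
      have a1: "adj (walk v a i) (walk v a (Suc i))" using walk_adj[OF va] .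
      obtain i' where i': "i = Suc i'" using i0 by (cases i) auto
      have a2: "adj (walk v a i) (walk v a i')" using walk_adj[OF va, of i'] adj_sym i' by simp
      have ne: "walk v a i' \<noteq> walk v a (Suc i)" using walk_no_backtrack[OF va, of i'] i' by simp
      have "walk (seg_end v a) (seg_last v a) k = other_nbr (walk v a i) (walk v a (Suc i))"
        using k ih1 ih2 by simp
      also have "\<dots> = walk v a i'" using other_nbr_unique[OF a1 a2 ne] by simp
      also have "i' = seg_len v a - k" using i' k unfolding i_def by simp
      finally show ?thesis .
    qed
  qed
qed

lemma seg_len_reverse: assumes p: "port v a" shows "seg_len (seg_end v a) (seg_last v a) = seg_len v a"
  unfolding seg_len_def[of "seg_end v a"]
proof (rule Least_equality)
  show "0 < seg_len v a \<and> walk (seg_end v a) (seg_last v a) (seg_len v a) \<in> N"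
    using walk_reverse[OF p, of "seg_len v a"] seg_len_props[OF p] p unfolding port_def by simp
next
  fix k assume k: "0 < k \<and> walk (seg_end v a) (seg_last v a) k \<in> N"
  show "seg_len v a \<le> k"
  proof (rule ccontr)
    assume "\<not> seg_len v a \<le> k"
    then have "walk (seg_end v a) (seg_last v a) k = walk v a (seg_len v a - k)" using walk_reverse[OF p, of k] by simp
    moreover have "walk v a (seg_len v a - k) \<in> X" using seg_len_props(3)[OF p, of "seg_len v a - k"] k \<open>\<not> seg_len v a \<le> k\<close> by simp
    ultimately show False using k X_N_disjoint by auto
  qed
qed

lemma seg_end_reverse: "port v a \<Longrightarrow> seg_end (seg_end v a) (seg_last v a) = v"
  using walk_reverse[of v a "seg_len v a"] seg_len_reverse[of v a] unfolding seg_end_def[of "seg_end v a"] by simp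

lemma segment_reverse: assumes p: "port v a" shows "segment (seg_end v a) (seg_last v a) = segment v a"
proof -
  have "segment (seg_end v a) (seg_last v a) = (\<lambda>k. walk v a (seg_len v a - k)) ` {1..<seg_len v a}"
    unfolding segment_def seg_len_reverse[OF p] using walk_reverse[OF p] by (intro image_cong) auto
  also have "\<dots> = walk v a ` ((\<lambda>k. seg_len v a - k) ` {1..<seg_len v a})" by (simp add: image_image)
  also have "(\<lambda>k. seg_len v a - k) ` {1..<seg_len v a} = {1..<seg_len v a}"
  proof
    show "(\<lambda>k. seg_len v a - k) ` {1..<seg_len v a} \<subseteq> {1..<seg_len v a}" by auto
    show "{1..<seg_len v a} \<subseteq> (\<lambda>k. seg_len v a - k) ` {1..<seg_len v a}"
    proof
      fix k assume "k \<in> {1..<seg_len v a}"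
      then show "k \<in> (\<lambda>k. seg_len v a - k) ` {1..<seg_len v a}" by (intro image_eqI[of _ _ "seg_len v a - k"]) auto
    qed
  qed
  finally show ?thesis unfolding segment_def by simp
qed

definition X_adj :: "('a \<times> 'a) set" where "X_adj = {(x, z). adj x z \<and> x \<in> X \<and> z \<in> X}"

lemma X_adj_rtrancl_sym: "(x, z) \<in> X_adj\<^sup>* \<Longrightarrow> (z, x) \<in> X_adj\<^sup>*"
proof (induction rule: rtrancl_induct)
  case base then show ?case by simp
next
  case (step y z)
  then have "(z, y) \<in> X_adj" unfolding X_adj_def using adj_sym by auto
  then show ?case using step.IH by (rule converse_rtrancl_into_rtrancl)
qed

lemma segment_eq_X_component:
  assumes p: "port v a" and x: "x \<in> segment v a"
  shows "segment v a = {z. (x, z) \<in> X_adj\<^sup>*}"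
proof
  show "{z. (x, z) \<in> X_adj\<^sup>*} \<subseteq> segment v a"
  proof
    fix z assume "z \<in> {z. (x, z) \<in> X_adj\<^sup>*}"
    then have "(x, z) \<in> X_adj\<^sup>*" by simp
    then show "z \<in> segment v a"
    proof (induction rule: rtrancl_induct)
      case base then show ?case using x .
    next
      case (step y z) then show ?case using segment_closed[OF p] unfolding X_adj_def by auto
    qed
  qed
next
  have va: "adj v a" using p unfolding port_def by simp
  have w1: "(a, walk v a m) \<in> X_adj\<^sup>*" if "0 < m" "m < seg_len v a" for m
    using that
  proof (induction m)
    case 0 then show ?case by simp
  next
    case (Suc m)
    show ?case
    proof (cases m)
      case 0 then show ?thesis by simp
    next
      case (Suc m')
      have "(walk v a m, walk v a (Suc m)) \<in> X_adj"
        using walk_adj[OF va, of m] seg_len_props(3)[OF p, of m] seg_len_props(3)[OF p, of "Suc m"] Suc.prems Suc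
        unfolding X_adj_def by auto
      then show ?thesis using Suc.IH Suc.prems Suc by (meson rtrancl_into_rtrancl zero_less_Suc Suc_lessD)
    qed
  qed
  obtain i where i: "0 < i" "i < seg_len v a" "x = walk v a i" using x unfolding segment_def by (auto simp: Suc_le_eq)
  have xa: "(x, a) \<in> X_adj\<^sup>*" using X_adj_rtrancl_sym[OF w1[OF i(1,2)]] i by simp
  show "segment v a \<subseteq> {z. (x, z) \<in> X_adj\<^sup>*}"
  proof
    fix z assume "z \<in> segment v a"
    then obtain m where m: "0 < m" "m < seg_len v a" "z = walk v a m" unfolding segment_def by (auto simp: Suc_le_eq)
    show "z \<in> {z. (x, z) \<in> X_adj\<^sup>*}" using rtrancl_trans[OF xa w1[OF m(1,2)]] m by simp
  qed
qed

lemma segment_eq_if_common: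
  "port v a \<Longrightarrow> port u b \<Longrightarrow> x \<in> segment v a \<Longrightarrow> x \<in> segment u b \<Longrightarrow> segment v a = segment u b"
  using segment_eq_X_component by metis

lemma port_of_segment:
  assumes p: "port v a" and q: "port u y" and y: "y \<in> segment v a"
  shows "(u = v \<and> y = a) \<or> (u = seg_end v a \<and> y = seg_last v a)"
proof -
  obtain i where i: "0 < i" "i < seg_len v a" "y = walk v a i" using y unfolding segment_def by (auto simp: Suc_le_eq)
  have "adj (walk v a i) u" using q i adj_sym unfolding port_def by auto
  then have "(i = 1 \<and> u = v) \<or> (i = seg_len v a - 1 \<and> u = seg_end v a)"
    using N_nbr_of_segment[OF p i(1,2)] q unfolding port_def by auto
  then show ?thesis using i unfolding seg_last_def by auto
qed

definition X_adj_mat :: "'a \<Rightarrow> 'a \<Rightarrow> real" where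
  "X_adj_mat x y = (if adj x y \<and> x \<in> X \<and> y \<in> X then 1 else 0)"

lemma X_adj_pow_local:
  assumes p: "port v a"
  shows "x \<in> segment v a \<Longrightarrow> y \<notin> segment v a \<Longrightarrow> mat_pow X X_adj_mat j x y = 0"
proof (induction j arbitrary: x)
  case 0 then show ?case by (auto simp: id_mat_def)
next
  case (Suc j)
  have "X_adj_mat x z * mat_pow X X_adj_mat j z y = 0" for z
  proof (cases "adj x z \<and> x \<in> X \<and> z \<in> X")
    case True
    then have "z \<in> segment v a" using segment_closed[OF p Suc.prems(1)] by blast
    then show ?thesis using Suc.IH Suc.prems by simp
  next
    case False then show ?thesis by (auto simp: X_adj_mat_def)
  qed
  then show ?case unfolding mat_pow.simps mat_mult_def by (intro sum.neutral) blast
qed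

lemma X_adj_pow_segment:
  assumes p: "port v a"
  shows "0 < i \<Longrightarrow> i < seg_len v a \<Longrightarrow> 0 < k \<Longrightarrow> k < seg_len v a \<Longrightarrow>
    mat_pow X X_adj_mat j (walk v a i) (walk v a k) = path_walks (seg_len v a - 1) j (i - 1) (k - 1)"
proof (induction j arbitrary: i)
  case 0
  have "walk v a i = walk v a k \<longleftrightarrow> i = k"
    using inj_onD[OF inj_on_segment[OF p], of i k] 0 by auto
  then show ?case using 0 by (auto simp: path_walks_def id_mat_def)
next
  case (Suc j)
  let ?h = "seg_len v a"
  have ss: "segment v a \<subseteq> X" using segment_subset_X[OF p] .
  have "mat_pow X X_adj_mat (Suc j) (walk v a i) (walk v a k) = (\<Sum>z\<in>X. X_adj_mat (walk v a i) z * mat_pow X X_adj_mat j z (walk v a k))"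
    by (simp add: mat_mult_def)
  also have "\<dots> = (\<Sum>z\<in>segment v a. X_adj_mat (walk v a i) z * mat_pow X X_adj_mat j z (walk v a k))"
  proof (rule sum.mono_neutral_right[OF finite_X ss])
    show "\<forall>z\<in>X - segment v a. X_adj_mat (walk v a i) z * mat_pow X X_adj_mat j z (walk v a k) = 0"
    proof
      fix z assume z: "z \<in> X - segment v a"
      have "walk v a i \<in> segment v a" using Suc.prems unfolding segment_def by auto
      then have "\<not> adj (walk v a i) z" using segment_closed[OF p] z by blast
      then show "X_adj_mat (walk v a i) z * mat_pow X X_adj_mat j z (walk v a k) = 0" by (simp add: X_adj_mat_def)
    qed
  qed
  also have "\<dots> = (\<Sum>m\<in>{1..<?h}. X_adj_mat (walk v a i) (walk v a m) * mat_pow X X_adj_mat j (walk v a m) (walk v a k))"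
    unfolding segment_def by (rule sum.reindex[OF inj_on_segment[OF p], unfolded comp_def])
  also have "\<dots> = (\<Sum>m\<in>{1..<?h}. path_adj (?h - 1) (i - 1) (m - 1) * path_walks (?h - 1) j (m - 1) (k - 1))"
  proof (intro sum.cong refl)
    fix m assume m: "m \<in> {1..<?h}"
    have "X_adj_mat (walk v a i) (walk v a m) = path_adj (?h - 1) (i - 1) (m - 1)"
    proof -
      have "walk v a i \<in> X" "walk v a m \<in> X" using seg_len_props(3)[OF p] Suc.prems m by auto
      moreover have "adj (walk v a i) (walk v a m) \<longleftrightarrow> (m = Suc i \<or> i = Suc m)"
        using adj_in_segment[OF p, of i m] Suc.prems m by auto
      ultimately show ?thesis using Suc.prems m unfolding X_adj_mat_def path_adj_def by auto
    qed
    then show "X_adj_mat (walk v a i) (walk v a m) * mat_pow X X_adj_mat j (walk v a m) (walk v a k) =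
      path_adj (?h - 1) (i - 1) (m - 1) * path_walks (?h - 1) j (m - 1) (k - 1)"
      using Suc.IH[of m] Suc.prems m by auto
  qed
  also have "\<dots> = (\<Sum>m'<?h - 1. path_adj (?h - 1) (i - 1) m' * path_walks (?h - 1) j m' (k - 1))"
  proof -
    have e: "{1..<?h} = {Suc 0..<Suc (?h - 1)}" using seg_len_props(1)[OF p] by simp
    show ?thesis unfolding e sum.shift_bounds_Suc_ivl by (simp add: atLeast0LessThan)
  qed
  also have "\<dots> = path_walks (?h - 1) (Suc j) (i - 1) (k - 1)"
    unfolding path_walks_def by (simp add: mat_mult_def)
  finally show ?case .
qed

lemma X_adj_pow_segment_ends:
  assumes p: "port v a"
  shows "mat_pow X X_adj_mat j a (seg_last v a) = end_walks (seg_len v a - 1) j"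
  using X_adj_pow_segment[OF p, of 1 "seg_len v a - 1" j] seg_len_props[OF p] unfolding end_walks_def seg_last_def
  by (simp add: numeral_2_eq_2)

lemma X_adj_pow_restrict: "mat_pow V X_adj_mat j x y = mat_pow X X_adj_mat j x y"
  by (rule mat_pow_restrict[OF finite_V]) (auto simp: V_eq X_adj_mat_def)

text \<open>\<open>interior_walks j v w\<close> counts the walks of length \<open>j + 2\<close> from \<open>v\<close> to \<open>w\<close> all of whose inner
  vertices lie in \<open>X\<close>.\<close>

definition interior_walks :: "nat \<Rightarrow> 'a \<Rightarrow> 'a \<Rightarrow> real" where
  "interior_walks j v w = (\<Sum>x\<in>X. \<Sum>y\<in>X. rel_mat adj v x * mat_pow X X_adj_mat j x y * rel_mat adj w y)"

lemma interior_walks_nonneg: "0 \<le> interior_walks j v w"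
  unfolding interior_walks_def rel_mat_def by (intro sum_nonneg mult_nonneg_nonneg mat_pow_nonneg) (auto simp: X_adj_mat_def)

lemma interior_walks_mat:
  assumes v: "v \<in> N" and w: "w \<in> N"
  shows "interior_walks j v w = mat_mult V (mat_mult V (rel_mat adj) (mat_pow V X_adj_mat j)) (rel_mat adj) v w"
proof -
  let ?A = "rel_mat adj"
  have nX: "?A v x = 0" "?A x w = 0" if "x \<notin> X" for x
    using that v w N_indep adj_in_V' adj_sym V_eq unfolding rel_mat_def by (auto, blast+)
  have XV: "X \<subseteq> V" using V_eq by simp
  have "mat_mult V (mat_mult V ?A (mat_pow V X_adj_mat j)) ?A v w = (\<Sum>y\<in>V. (\<Sum>x\<in>V. ?A v x * mat_pow V X_adj_mat j x y) * ?A y w)"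
    unfolding mat_mult_def by simp
  also have "\<dots> = (\<Sum>y\<in>X. (\<Sum>x\<in>V. ?A v x * mat_pow V X_adj_mat j x y) * ?A y w)"
    using finite_V XV nX by (intro sum.mono_neutral_right) auto
  also have "\<dots> = (\<Sum>y\<in>X. (\<Sum>x\<in>X. ?A v x * mat_pow X X_adj_mat j x y) * ?A y w)"
  proof (rule sum.cong[OF refl])
    fix y assume "y \<in> X"
    have "(\<Sum>x\<in>V. ?A v x * mat_pow V X_adj_mat j x y) = (\<Sum>x\<in>X. ?A v x * mat_pow V X_adj_mat j x y)"
      using finite_V XV nX by (intro sum.mono_neutral_right) auto
    then show "(\<Sum>x\<in>V. ?A v x * mat_pow V X_adj_mat j x y) * ?A y w = (\<Sum>x\<in>X. ?A v x * mat_pow X X_adj_mat j x y) * ?A y w"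
      using X_adj_pow_restrict by simp
  qed
  also have "\<dots> = (\<Sum>y\<in>X. \<Sum>x\<in>X. rel_mat adj v x * mat_pow X X_adj_mat j x y * rel_mat adj w y)"
  proof (rule sum.cong[OF refl])
    fix y
    have symA: "?A y w = rel_mat adj w y" using adj_sym unfolding rel_mat_def by auto
    show "(\<Sum>x\<in>X. ?A v x * mat_pow X X_adj_mat j x y) * ?A y w = (\<Sum>x\<in>X. rel_mat adj v x * mat_pow X X_adj_mat j x y * rel_mat adj w y)"
      unfolding symA by (simp add: sum_distrib_right rel_mat_def)
  qed
  also have "\<dots> = interior_walks j v w" unfolding interior_walks_def by (rule sum.swap)
  finally show ?thesis by simp
qed

lemma sum_walks_from_port:
  assumes p: "port v x" and w: "w \<in> N" and vw: "v \<noteq> w"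
  shows "(\<Sum>y\<in>X. mat_pow X X_adj_mat j x y * rel_mat adj w y) =
    (if seg_end v x = w then end_walks (seg_len v x - 1) j else 0)"
proof -
  have lX: "seg_last v x \<in> X" using seg_len_props(3)[OF p, of "seg_len v x - 1"] seg_len_props(4)[OF p] unfolding seg_last_def by simp
  have "(\<Sum>y\<in>X. mat_pow X X_adj_mat j x y * rel_mat adj w y) = (\<Sum>y\<in>X. if y = seg_last v x then (if seg_end v x = w then mat_pow X X_adj_mat j x y else 0) else 0)"
  proof (intro sum.cong refl)
    fix y assume yX: "y \<in> X"
    show "mat_pow X X_adj_mat j x y * rel_mat adj w y = (if y = seg_last v x then (if seg_end v x = w then mat_pow X X_adj_mat j x y else 0) else 0)"
    proof (cases "adj w y")
      case False then show ?thesis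
        using port_reverse[OF p] adj_sym unfolding rel_mat_def port_def by auto
    next
      case True
      then have q: "port w y" using w unfolding port_def by simp
      show ?thesis
      proof (cases "y \<in> segment v x")
        case False then show ?thesis using X_adj_pow_local[OF p port_in_segment[OF p] False] True
          using port_in_segment[OF p] lX by (auto simp: rel_mat_def dest: port_in_segment)
      next
        case yin: True
        have "(w = v \<and> y = x) \<or> (w = seg_end v x \<and> y = seg_last v x)" using port_of_segment[OF p q yin] .
        then show ?thesis using vw True by (auto simp: rel_mat_def)
      qed
    qed
  qed
  also have "\<dots> = (if seg_end v x = w then mat_pow X X_adj_mat j x (seg_last v x) else 0)"
    using finite_X lX by simp
  also have "\<dots> = (if seg_end v x = w then end_walks (seg_len v x - 1) j else 0)"
    using X_adj_pow_segment_ends[OF p] by simp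
  finally show ?thesis .
qed

lemma interior_walks_segments:
  assumes v: "v \<in> N" and w: "w \<in> N" and vw: "v \<noteq> w"
  shows "interior_walks j v w = (\<Sum>x\<in>{x. adj v x \<and> seg_end v x = w}. end_walks (seg_len v x - 1) j)"
proof -
  have "interior_walks j v w = (\<Sum>x\<in>X. rel_mat adj v x * (\<Sum>y\<in>X. mat_pow X X_adj_mat j x y * rel_mat adj w y))"
    unfolding interior_walks_def by (simp add: sum_distrib_left mult.assoc)
  also have "\<dots> = (\<Sum>x\<in>X. if adj v x \<and> seg_end v x = w then end_walks (seg_len v x - 1) j else 0)"
    using sum_walks_from_port[OF _ w vw] v by (intro sum.cong refl) (auto simp: rel_mat_def port_def)
  also have "\<dots> = (\<Sum>x\<in>{x\<in>X. adj v x \<and> seg_end v x = w}. end_walks (seg_len v x - 1) j)"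
    by (rule sum.inter_filter[symmetric, OF finite_X])
  also have "{x\<in>X. adj v x \<and> seg_end v x = w} = {x. adj v x \<and> seg_end v x = w}"
    using port_X v unfolding port_def by blast
  finally show ?thesis .
qed

lemma segment_label_unique:
  assumes p: "port v a" and q: "port u b" and e: "segment u b = segment v a"
  shows "({u, seg_end u b}, seg_len u b) = ({v, seg_end v a}, seg_len v a)"
proof -
  have "b \<in> segment v a" using port_in_segment[OF q] e by simp
  then have "(u = v \<and> b = a) \<or> (u = seg_end v a \<and> b = seg_last v a)" using port_of_segment[OF p q] by simp
  then show ?thesis
  proof
    assume "u = v \<and> b = a" then show ?thesis by simp
  next
    assume h: "u = seg_end v a \<and> b = seg_last v a"
    then show ?thesis using seg_end_reverse[OF p] seg_len_reverse[OF p] by auto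
  qed
qed

definition segments :: "'a set set" where "segments = {segment v a | v a. port v a}"

definition seg_label :: "'a set \<Rightarrow> 'a set \<times> nat" where
  "seg_label S = (SOME L. \<exists>v a. port v a \<and> segment v a = S \<and> L = ({v, seg_end v a}, seg_len v a))"

lemma seg_label_eq: assumes p: "port v a" shows "seg_label (segment v a) = ({v, seg_end v a}, seg_len v a)"
  unfolding seg_label_def
proof (rule someI2[of _ "({v, seg_end v a}, seg_len v a)"])
  show "\<exists>u b. port u b \<and> segment u b = segment v a \<and> ({v, seg_end v a}, seg_len v a) = ({u, seg_end u b}, seg_len u b)"
    using p by blast
next
  fix L assume "\<exists>u b. port u b \<and> segment u b = segment v a \<and> L = ({u, seg_end u b}, seg_len u b)"
  then show "L = ({v, seg_end v a}, seg_len v a)" using segment_label_unique[OF p] by blast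
qed

lemma finite_segments: "finite segments"
proof -
  have "segments \<subseteq> Pow X" unfolding segments_def using segment_subset_X by blast
  then show ?thesis using finite_X finite_subset by blast
qed

lemma seg_end_in_N: "port v a \<Longrightarrow> seg_end v a \<in> N"
  using seg_len_props(2) unfolding seg_end_def by blast

lemma inj_on_segment_port:
  assumes v: "v \<in> N"
  shows "inj_on (segment v) {x. adj v x \<and> seg_end v x \<noteq> v}"
proof (rule inj_onI)
  fix x1 x2 assume x1: "x1 \<in> {x. adj v x \<and> seg_end v x \<noteq> v}" and x2: "x2 \<in> {x. adj v x \<and> seg_end v x \<noteq> v}"
    and e: "segment v x1 = segment v x2"
  have p1: "port v x1" and p2: "port v x2" using x1 x2 v unfolding port_def by auto
  have "x2 \<in> segment v x1" using port_in_segment[OF p2] e by simp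
  then have "x2 = x1 \<or> (v = seg_end v x1 \<and> x2 = seg_last v x1)" using port_of_segment[OF p1 p2] by simp
  then show "x1 = x2" using x1 by auto
qed

lemma card_segments_between:
  assumes v: "v \<in> N" and w: "w \<in> N" and vw: "v \<noteq> w"
  shows "card {S\<in>segments. seg_label S = ({v, w}, l)} = card {x. adj v x \<and> seg_end v x = w \<and> seg_len v x = l}"
proof -
  let ?P = "{x. adj v x \<and> seg_end v x = w \<and> seg_len v x = l}"
  have "bij_betw (segment v) ?P {S\<in>segments. seg_label S = ({v, w}, l)}"
    unfolding bij_betw_def
  proof (intro conjI)
    show "inj_on (segment v) ?P" using vw by (intro inj_on_subset[OF inj_on_segment_port[OF v]]) auto
    show "segment v ` ?P = {S\<in>segments. seg_label S = ({v, w}, l)}"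
    proof
      show "segment v ` ?P \<subseteq> {S\<in>segments. seg_label S = ({v, w}, l)}"
      proof
        fix S assume "S \<in> segment v ` ?P"
        then obtain x where x: "x \<in> ?P" "S = segment v x" by blast
        have p: "port v x" using x v unfolding port_def by auto
        show "S \<in> {S\<in>segments. seg_label S = ({v, w}, l)}" using x seg_label_eq[OF p] p unfolding segments_def by auto
      qed
    next
      show "{S\<in>segments. seg_label S = ({v, w}, l)} \<subseteq> segment v ` ?P"
      proof
        fix S assume S: "S \<in> {S\<in>segments. seg_label S = ({v, w}, l)}"
        then obtain u b where q: "port u b" "S = segment u b" unfolding segments_def by auto
        have L: "{u, seg_end u b} = {v, w}" "seg_len u b = l" using seg_label_eq[OF q(1)] S q(2) by auto
        show "S \<in> segment v ` ?P"
        proof (cases "u = v")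
          case True
          then have "seg_end u b = w" using L vw by (metis doubleton_eq_iff)
          then show ?thesis using q L True unfolding port_def by auto
        next
          case False
          then have uw: "u = w" "seg_end u b = v" using L by (metis doubleton_eq_iff)+
          have pr: "port v (seg_last u b)" using port_reverse[OF q(1)] uw by simp
          have "seg_last u b \<in> ?P"
            using pr seg_end_reverse[OF q(1)] seg_len_reverse[OF q(1)] uw L unfolding port_def by auto
          moreover have "S = segment v (seg_last u b)" using segment_reverse[OF q(1)] uw q(2) by simp
          ultimately show ?thesis by blast
        qed
      qed
    qed
  qed
  from bij_betw_same_card[OF this] show ?thesis by simp
qed

lemma loop_nbrs:
  assumes p: "port v a" and e: "seg_end v a = v"
  shows "{x. adj v x} = {a, seg_last v a}" "a \<noteq> seg_last v a"
proof -
  have va: "adj v a" using p unfolding port_def by simp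
  have vl: "adj v (seg_last v a)" using port_reverse[OF p] e unfolding port_def by simp
  show ne: "a \<noteq> seg_last v a"
  proof
    assume h: "a = seg_last v a"
    have "seg_len v a - 1 = 1"
      using inj_onD[OF inj_on_segment[OF p], of 1 "seg_len v a - 1"] h seg_len_props(4)[OF p] unfolding seg_last_def by (auto simp: Suc_le_eq)
    then have "seg_len v a = 2" by simp
    then have "walk v a 2 = v" using e unfolding seg_end_def by simp
    moreover have "walk v a 2 \<noteq> walk v a 0" using walk_no_backtrack[OF va, of 0] by (simp add: numeral_2_eq_2)
    ultimately show False by simp
  qed
  have "{x. adj v x} = {a, other_nbr v a}" using nbrs_eq_other[OF va] .
  moreover have "seg_last v a = other_nbr v a" using other_nbr_unique[OF va vl] ne by simp
  ultimately show "{x. adj v x} = {a, seg_last v a}" by simp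
qed

lemma seg_last_in_segment: "port v a \<Longrightarrow> seg_last v a \<in> segment v a"
  unfolding seg_last_def segment_def using seg_len_props(4)[of v a] by (intro imageI) auto

lemma card_loop_segments:
  assumes v: "v \<in> N"
  shows "card {S\<in>segments. seg_label S = ({v}, l)} = (if \<exists>a. port v a \<and> seg_end v a = v \<and> seg_len v a = l then 1 else 0)"
proof (cases "\<exists>a. port v a \<and> seg_end v a = v \<and> seg_len v a = l")
  case True
  then obtain a where a: "port v a" "seg_end v a = v" "seg_len v a = l" by blast
  have "{S\<in>segments. seg_label S = ({v}, l)} = {segment v a}"
  proof
    show "{segment v a} \<subseteq> {S\<in>segments. seg_label S = ({v}, l)}" using a seg_label_eq[OF a(1)] unfolding segments_def by auto
  next
    show "{S\<in>segments. seg_label S = ({v}, l)} \<subseteq> {segment v a}"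
    proof
      fix S assume S: "S \<in> {S\<in>segments. seg_label S = ({v}, l)}"
      then obtain u b where q: "port u b" "S = segment u b" unfolding segments_def by auto
      have L: "{u, seg_end u b} = {v}" using seg_label_eq[OF q(1)] S q(2) by auto
      then have u: "u = v" by auto
      then have "b \<in> {a, seg_last v a}" using loop_nbrs(1)[OF a(1,2)] q(1) unfolding port_def by auto
      then have "b \<in> segment v a" using port_in_segment[OF a(1)] seg_last_in_segment[OF a(1)] by auto
      then have "segment u b = segment v a" using segment_eq_if_common[OF q(1) a(1) port_in_segment[OF q(1)]] by simp
      then show "S \<in> {segment v a}" using q by simp
    qed
  qed
  then show ?thesis using True by simp
next
  case False
  have e: "{S\<in>segments. seg_label S = ({v}, l)} = {}"
  proof (rule ccontr)
    assume "{S\<in>segments. seg_label S = ({v}, l)} \<noteq> {}"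
    then obtain S where S: "S \<in> segments" "seg_label S = ({v}, l)" by auto
    then obtain u b where q: "port u b" "S = segment u b" unfolding segments_def by auto
    have "{u, seg_end u b} = {v}" "seg_len u b = l" using seg_label_eq[OF q(1)] S q(2) by auto
    then show False using False q by auto
  qed
  show ?thesis unfolding e using False by (simp only: card.empty if_False)
qed

lemma seg_label_in_N: "S \<in> segments \<Longrightarrow> \<exists>v w. v \<in> N \<and> w \<in> N \<and> fst (seg_label S) = {v, w}"
  unfolding segments_def using seg_label_eq seg_end_in_N unfolding port_def by fastforce

definition segment_of :: "'a \<Rightarrow> 'a set" where
  "segment_of x = (SOME S. S \<in> segments \<and> x \<in> S)"

lemma segment_of_eq:
  assumes p: "port v a" and x: "x \<in> segment v a"
  shows "segment_of x = segment v a"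
proof -
  have "segment_of x \<in> segments \<and> x \<in> segment_of x"
    unfolding segment_of_def by (rule someI[of _ "segment v a"]) (use p x in \<open>auto simp: segments_def\<close>)
  then show ?thesis using segment_eq_if_common p x unfolding segments_def by blast
qed

definition seg_rep :: "'a set \<Rightarrow> 'a \<times> 'a" where
  "seg_rep S = (SOME p. port (fst p) (snd p) \<and> segment (fst p) (snd p) = S)"

lemma seg_rep_props: assumes "S \<in> segments" shows "port (fst (seg_rep S)) (snd (seg_rep S)) \<and> segment (fst (seg_rep S)) (snd (seg_rep S)) = S"
proof -
  obtain v a where "port v a" "S = segment v a" using assms unfolding segments_def by auto
  then have "\<exists>p. port (fst p) (snd p) \<and> segment (fst p) (snd p) = S" by (intro exI[of _ "(v, a)"]) simp
  then show ?thesis unfolding seg_rep_def by (rule someI_ex)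
qed

definition seg_index :: "'a \<Rightarrow> 'a \<Rightarrow> 'a \<Rightarrow> nat" where
  "seg_index v a x = (SOME i. 0 < i \<and> i < seg_len v a \<and> walk v a i = x)"

lemma seg_index_props: assumes "x \<in> segment v a" shows "0 < seg_index v a x \<and> seg_index v a x < seg_len v a \<and> walk v a (seg_index v a x) = x"
proof -
  obtain i where "0 < i" "i < seg_len v a" "walk v a i = x" using assms unfolding segment_def by (auto simp: Suc_le_eq)
  then have "\<exists>i. 0 < i \<and> i < seg_len v a \<and> walk v a i = x" by blast
  then show ?thesis unfolding seg_index_def by (rule someI_ex)
qed

lemma card_loop_cycle: assumes p: "port v a" shows "card (insert v (segment v a)) = seg_len v a"
proof -
  have "v \<notin> segment v a" using segment_subset_X[OF p] p X_N_disjoint unfolding port_def by auto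
  moreover have "finite (segment v a)" using segment_subset_X[OF p] finite_X finite_subset by blast
  ultimately show ?thesis using card_segment[OF p] seg_len_props(4)[OF p] by simp
qed

lemma loop_cycle_closed:
  assumes p: "port v a" and e: "seg_end v a = v"
    and u: "u \<in> insert v (segment v a)" and uw: "adj u w"
  shows "w \<in> insert v (segment v a)"
proof (cases "u = v")
  case True
  then show ?thesis using loop_nbrs(1)[OF p e] uw port_in_segment[OF p] seg_last_in_segment[OF p] by auto
next
  case False
  then have us: "u \<in> segment v a" using u by simp
  show ?thesis
  proof (cases "w \<in> X")
    case True then show ?thesis using segment_closed[OF p us uw] by simp
  next
    case False
    then have wN: "w \<in> N" using adj_in_V'[OF uw] V_eq by auto
    obtain i where i: "0 < i" "i < seg_len v a" "u = walk v a i"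
      using us unfolding segment_def by (auto simp: Suc_le_eq)
    have "(i = 1 \<and> w = v) \<or> (i = seg_len v a - 1 \<and> w = seg_end v a)"
      using N_nbr_of_segment[OF p i(1,2) _ wN] uw i(3) by simp
    then show ?thesis using e by auto
  qed
qed

lemma sum_loop_cycle:
  assumes p: "port v a" and e: "seg_end v a = v" and u: "u \<in> V"
  shows "(\<Sum>w\<in>insert v (segment v a). rel_mat adj u w) = (if u \<in> insert v (segment v a) then 2 else 0)"
proof -
  let ?C = "insert v (segment v a)"
  have "finite ?C" using segment_subset_X[OF p] finite_X finite_subset by blast
  then have "(\<Sum>w\<in>?C. rel_mat adj u w) = real (card {w\<in>?C. adj u w})"
    by (rule sum_rel_mat)
  also have "{w\<in>?C. adj u w} = (if u \<in> ?C then {w. adj u w} else {})"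
    using loop_cycle_closed[OF p e] adj_sym by auto
  finally show ?thesis using degree_two[OF u] by simp
qed

lemma loop_cycle_connected:
  assumes p: "port v a" and c: "c \<in> insert v (segment v a)"
  shows "(v, c) \<in> {(x, y). adj x y}\<^sup>*"
proof -
  have va: "adj v a" using p unfolding port_def by simp
  have "(v, walk v a i) \<in> {(x, y). adj x y}\<^sup>*" for i
  proof (induction i)
    case 0 then show ?case by simp
  next
    case (Suc i)
    then show ?case using walk_adj[OF va, of i] by (simp add: rtrancl_into_rtrancl)
  qed
  then show ?thesis using c unfolding segment_def by auto
qed

lemma path_start_port:
  assumes vs: "distinct vs" "vs \<noteq> []" "set vs \<subseteq> X"
    and edges: "\<And>y z. y \<in> X \<Longrightarrow> z \<in> X \<Longrightarrow> adj y z \<Longrightarrow> y \<in> set vs \<Longrightarrow>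
      \<exists>i. Suc i < length vs \<and> {y, z} = {vs ! i, vs ! Suc i}"
  shows "\<exists>v. port v (vs ! 0)"
proof -
  let ?y = "vs ! 0"
  have yX: "?y \<in> X" using vs by (simp add: subset_iff)
  have "\<exists>w. adj ?y w \<and> w \<notin> X"
  proof (rule ccontr)
    assume nn: "\<not> (\<exists>w. adj ?y w \<and> w \<notin> X)"
    have "{w. adj ?y w} \<subseteq> {vs ! Suc 0}"
    proof (intro subsetI)
      fix w assume w: "w \<in> {w. adj ?y w}"
      then have wX: "w \<in> X" using nn by blast
      obtain i where i: "Suc i < length vs" "{?y, w} = {vs ! i, vs ! Suc i}"
        using edges[OF yX wX] w vs(2) by auto
      have "(?y = vs ! i \<and> w = vs ! Suc i) \<or> (?y = vs ! Suc i \<and> w = vs ! i)"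
        using i(2) by (simp add: doubleton_eq_iff)
      moreover have "?y = vs ! i \<longleftrightarrow> i = 0" "?y \<noteq> vs ! Suc i"
        using nth_eq_iff_index_eq[OF vs(1), of 0 i] nth_eq_iff_index_eq[OF vs(1), of 0 "Suc i"] i(1) vs(2)
        by auto
      ultimately show "w \<in> {vs ! Suc 0}" by auto
    qed
    then have "card {w. adj ?y w} \<le> card {vs ! Suc 0}" by (intro card_mono) auto
    then show False using degree_two yX V_eq by simp
  qed
  then obtain w where w: "adj ?y w" "w \<notin> X" by blast
  then have "w \<in> N" using adj_in_V'[OF w(1)] V_eq by auto
  then show ?thesis using adj_sym[OF w(1)] unfolding port_def by blast
qed

lemma path_in_segments:
  assumes vs: "distinct vs" "vs \<noteq> []" "set vs \<subseteq> X"
    and edges: "\<And>y z. y \<in> X \<Longrightarrow> z \<in> X \<Longrightarrow> adj y z \<Longrightarrow> y \<in> set vs \<Longrightarrow>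
      \<exists>i. Suc i < length vs \<and> {y, z} = {vs ! i, vs ! Suc i}"
    and cons: "\<And>i. Suc i < length vs \<Longrightarrow> adj (vs ! i) (vs ! Suc i)"
  shows "i < length vs \<Longrightarrow> \<exists>v a. port v a \<and> vs ! i \<in> segment v a"
proof (induction i)
  case 0
  then show ?case using path_start_port[OF vs edges] port_in_segment by blast
next
  case (Suc i)
  then obtain v a where p: "port v a" "vs ! i \<in> segment v a" by auto
  have "vs ! Suc i \<in> X" using vs Suc.prems by (simp add: subset_iff)
  then have "vs ! Suc i \<in> segment v a" using segment_closed[OF p(1) p(2) cons[OF Suc.prems]] by simp
  then show ?case using p by blast
qed

text \<open>A cycle of \<open>G\<^sub>X\<close> inside \<open>X\<close> would contain no segment; the path hypothesis excludes it.\<close>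

lemma X_covered_by_segments:
  assumes P: "disjoint_union_of is_path_graph P" and fst_P: "fst P = X"
    and P_edges: "\<And>y z. y \<in> X \<Longrightarrow> z \<in> X \<Longrightarrow> {y, z} \<in> snd P \<longleftrightarrow> adj y z"
    and x: "x \<in> X"
  shows "\<exists>v a. port v a \<and> x \<in> segment v a"
proof -
  obtain C where C: "\<Union>C = fst P" "\<forall>c\<in>C. \<forall>d\<in>C. c \<noteq> d \<longrightarrow> c \<inter> d = {}"
      "\<forall>e\<in>snd P. \<exists>c\<in>C. e \<subseteq> c" "\<forall>c\<in>C. is_path_graph (induced P c)"
    using P unfolding disjoint_union_of_def by (elim exE conjE) (rule that; assumption)
  obtain c where c: "c \<in> C" "x \<in> c" using C(1) x fst_P by blast
  have "is_path_graph (induced P c)" using C(4) c(1) by blast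
  then obtain vs where vs: "vs \<noteq> []" "distinct vs" "set vs = fst (induced P c)"
      "snd (induced P c) = {{vs ! i, vs ! Suc i} | i. Suc i < length vs}"
    unfolding is_path_graph_def by (elim exE conjE) (rule that; assumption)
  have set_vs: "set vs = X \<inter> c" using vs(3) fst_P unfolding induced_def by simp
  have edges: "\<exists>i. Suc i < length vs \<and> {y, z} = {vs ! i, vs ! Suc i}"
    if "y \<in> X" "z \<in> X" "adj y z" "y \<in> set vs" for y z
  proof -
    have yz: "{y, z} \<in> snd P" using that P_edges by simp
    then obtain c' where c': "c' \<in> C" "{y, z} \<subseteq> c'" using C(3) by blast
    have "c' = c" using C(2) c'(1) c(1) c'(2) that(4) set_vs by blast
    then have "{y, z} \<in> snd (induced P c)" using yz c'(2) unfolding induced_def by simp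
    then show ?thesis unfolding vs(4) by blast
  qed
  have cons: "adj (vs ! i) (vs ! Suc i)" if "Suc i < length vs" for i
  proof -
    have "{vs ! i, vs ! Suc i} \<in> snd (induced P c)" unfolding vs(4) using that by blast
    moreover have "vs ! i \<in> X" "vs ! Suc i \<in> X" using that set_vs nth_mem[of _ vs] by auto
    ultimately show ?thesis using P_edges unfolding induced_def by simp
  qed
  obtain i where "i < length vs" "x = vs ! i" using set_vs x c by (metis IntI in_set_conv_nth)
  then show ?thesis using path_in_segments[OF vs(2,1) _ edges cons] set_vs by auto
qed
end

section \<open>Matching the segments of two such graphs\<close>

lemma bij_betw_preserving_fibres:
  assumes A: "finite A" and B: "finite B"
    and card_eq: "\<And>L. card {a\<in>A. f a = L} = card {b\<in>B. g b = L}"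
  obtains \<beta> where "bij_betw \<beta> A B" "\<And>a. a \<in> A \<Longrightarrow> g (\<beta> a) = f a"
proof -
  define FA where "FA L = {a\<in>A. f a = L}" for L
  define FB where "FB L = {b\<in>B. g b = L}" for L
  have "\<forall>L. \<exists>h. bij_betw h (FA L) (FB L)"
    using card_eq A B unfolding FA_def FB_def by (auto intro: finite_same_card_bij)
  then obtain h where h: "\<And>L. bij_betw (h L) (FA L) (FB L)" by (metis choice)
  define \<beta> where "\<beta> a = h (f a) a" for a
  have "bij_betw \<beta> (FA L) (FB L)" for L
    using h[of L] by (rule bij_betw_cong[THEN iffD1, rotated]) (simp add: \<beta>_def FA_def)
  then have "bij_betw \<beta> (\<Union>L\<in>UNIV. FA L) (\<Union>L\<in>UNIV. FB L)"
    by (intro bij_betw_UNION_disjoint) (auto simp: disjoint_family_on_def FB_def)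
  moreover have "(\<Union>L\<in>UNIV. FA L) = A" "(\<Union>L\<in>UNIV. FB L) = B" by (auto simp: FA_def FB_def)
  moreover have "g (\<beta> a) = f a" if "a \<in> A" for a
    using h[of "f a"] that unfolding bij_betw_def FA_def FB_def \<beta>_def by auto
  ultimately show ?thesis using that by auto
qed

locale cycle_nbhd_pair = G: cycle_nbhd V X N adj + H: cycle_nbhd V X N adj'
  for V X N :: "'a set" and adj adj' :: "'a \<Rightarrow> 'a \<Rightarrow> bool" +
  assumes same_segment_counts: "v \<in> N \<Longrightarrow> w \<in> N \<Longrightarrow> v \<noteq> w \<Longrightarrow>
      card {x. adj v x \<and> G.seg_end v x = w \<and> G.seg_len v x = l} =
      card {x. adj' v x \<and> H.seg_end v x = w \<and> H.seg_len v x = l}"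
    and same_loop_lengths: "G.port v a \<Longrightarrow> G.seg_end v a = v \<Longrightarrow> H.port v b \<Longrightarrow> H.seg_end v b = v \<Longrightarrow>
      G.seg_len v a = H.seg_len v b"
begin

lemma cycle_nbhd_pair_swap: "cycle_nbhd_pair V X N adj' adj"
  unfolding cycle_nbhd_pair_def cycle_nbhd_pair_axioms_def
  using G.cycle_nbhd_axioms H.cycle_nbhd_axioms
  by (auto intro: same_segment_counts[symmetric] same_loop_lengths[symmetric])

lemma loop_transfer:
  assumes v: "v \<in> N" and a: "G.port v a" "G.seg_end v a = v" "G.seg_len v a = l"
  shows "\<exists>b. H.port v b \<and> H.seg_end v b = v \<and> H.seg_len v b = l"
proof -
  have vV: "v \<in> V" using v G.V_eq by simp
  obtain b where b: "adj' v b" using H.nbr_exists[OF vV] by blast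
  have pb: "H.port v b" using b v unfolding H.port_def by simp
  have e: "H.seg_end v b = v"
  proof (rule ccontr)
    assume ne: "H.seg_end v b \<noteq> v"
    let ?w = "H.seg_end v b"
    have wN: "?w \<in> N" using H.seg_end_in_N[OF pb] .
    have fin: "finite {x. adj' v x \<and> H.seg_end v x = ?w \<and> H.seg_len v x = H.seg_len v b}"
      by (rule finite_subset[OF _ H.finite_V]) (auto dest: H.adj_in_V')
    have "b \<in> {x. adj' v x \<and> H.seg_end v x = ?w \<and> H.seg_len v x = H.seg_len v b}" using b by simp
    then have "card {x. adj' v x \<and> H.seg_end v x = ?w \<and> H.seg_len v x = H.seg_len v b} \<noteq> 0" using fin by auto
    then have "card {x. adj v x \<and> G.seg_end v x = ?w \<and> G.seg_len v x = H.seg_len v b} \<noteq> 0"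
      using same_segment_counts[OF v wN ne[symmetric]] by simp
    then obtain x where x: "adj v x" "G.seg_end v x = ?w" by (metis (mono_tags, lifting) Collect_empty_eq card.empty)
    have "x \<in> {a, G.seg_last v a}" using G.loop_nbrs(1)[OF a(1,2)] x by auto
    moreover have "G.seg_end v (G.seg_last v a) = v" using G.seg_end_reverse[OF a(1)] a(2) by simp
    ultimately show False using x a ne by auto
  qed
  show ?thesis using same_loop_lengths[OF a(1,2) pb e] a pb e by auto
qed

lemma card_segments_with_label: "card {S\<in>G.segments. G.seg_label S = L} = card {S\<in>H.segments. H.seg_label S = L}"
proof -
  obtain P l where L: "L = (P, l)" by (cases L) auto
  show ?thesis
  proof (cases "\<exists>v w. v \<in> N \<and> w \<in> N \<and> P = {v, w}")
    case True
    then obtain v w where vw: "v \<in> N" "w \<in> N" "P = {v, w}" by blast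
    show ?thesis
    proof (cases "v = w")
      case False
      then show ?thesis using G.card_segments_between[OF vw(1,2) False] H.card_segments_between[OF vw(1,2) False]
          same_segment_counts[OF vw(1,2) False] L vw(3) by simp
    next
      case True
      have "(\<exists>a. G.port v a \<and> G.seg_end v a = v \<and> G.seg_len v a = l) \<longleftrightarrow> (\<exists>b. H.port v b \<and> H.seg_end v b = v \<and> H.seg_len v b = l)"
        using loop_transfer[OF vw(1)] cycle_nbhd_pair.loop_transfer[OF cycle_nbhd_pair_swap vw(1)] by blast
      then show ?thesis using G.card_loop_segments[OF vw(1)] H.card_loop_segments[OF vw(1)] L vw(3) True by simp
    qed
  next
    case False
    have "{S\<in>G.segments. G.seg_label S = L} = {}" using G.seg_label_in_N False L by fastforce
    moreover have "{S\<in>H.segments. H.seg_label S = L} = {}" using H.seg_label_in_N False L by fastforce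
    ultimately show ?thesis by (simp only: card.empty)
  qed
qed

definition seg_match :: "'a set \<Rightarrow> 'a set" where
  "seg_match = (SOME \<beta>. bij_betw \<beta> G.segments H.segments \<and>
     (\<forall>S\<in>G.segments. H.seg_label (\<beta> S) = G.seg_label S))"

lemma seg_match_props:
  "bij_betw seg_match G.segments H.segments" "\<And>S. S \<in> G.segments \<Longrightarrow> H.seg_label (seg_match S) = G.seg_label S"
proof -
  obtain \<beta> where "bij_betw \<beta> G.segments H.segments" "\<And>S. S \<in> G.segments \<Longrightarrow> H.seg_label (\<beta> S) = G.seg_label S"
    using bij_betw_preserving_fibres[OF G.finite_segments H.finite_segments card_segments_with_label] by blast
  then have "\<exists>\<beta>. bij_betw \<beta> G.segments H.segments \<and> (\<forall>S\<in>G.segments. H.seg_label (\<beta> S) = G.seg_label S)"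
    by blast
  from someI_ex[OF this] show "bij_betw seg_match G.segments H.segments"
    "\<And>S. S \<in> G.segments \<Longrightarrow> H.seg_label (seg_match S) = G.seg_label S"
    unfolding seg_match_def by auto
qed

lemma seg_match_port:
  assumes p: "G.port v a"
  shows "\<exists>b. H.port v b \<and> H.seg_end v b = G.seg_end v a \<and> H.seg_len v b = G.seg_len v a \<and>
    H.segment v b = seg_match (G.segment v a)"
proof -
  have SG: "G.segment v a \<in> G.segments" using p unfolding G.segments_def by blast
  then have "seg_match (G.segment v a) \<in> H.segments" using seg_match_props(1) unfolding bij_betw_def by blast
  then obtain u b where q: "H.port u b" "seg_match (G.segment v a) = H.segment u b"
    unfolding H.segments_def by blast
  have lb: "({u, H.seg_end u b}, H.seg_len u b) = ({v, G.seg_end v a}, G.seg_len v a)"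
    using seg_match_props(2)[OF SG] H.seg_label_eq[OF q(1)] G.seg_label_eq[OF p] q(2) by simp
  show ?thesis
  proof (cases "u = v")
    case True
    then have "H.seg_end u b = G.seg_end v a" using lb by (metis doubleton_eq_iff insert_absorb2 prod.inject)
    then show ?thesis using q lb True by auto
  next
    case False
    then have uv: "u = G.seg_end v a" "H.seg_end u b = v" using lb by (metis doubleton_eq_iff prod.inject)+
    show ?thesis
      using H.port_reverse[OF q(1)] H.seg_end_reverse[OF q(1)] H.seg_len_reverse[OF q(1)]
        H.segment_reverse[OF q(1)] uv lb q(2)
      by (intro exI[of _ "H.seg_last u b"]) auto
  qed
qed

definition matched_port :: "'a \<Rightarrow> 'a \<Rightarrow> 'a" where
  "matched_port v a = (SOME b. H.port v b \<and> H.seg_end v b = G.seg_end v a \<and>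
     H.seg_len v b = G.seg_len v a \<and> H.segment v b = seg_match (G.segment v a))"

lemma matched_port_props:
  assumes "G.port v a"
  shows "H.port v (matched_port v a)" "H.seg_end v (matched_port v a) = G.seg_end v a"
    "H.seg_len v (matched_port v a) = G.seg_len v a"
    "H.segment v (matched_port v a) = seg_match (G.segment v a)"
  using someI_ex[OF seg_match_port[OF assms]] unfolding matched_port_def by auto

text \<open>Walk along the representative port of the segment of \<open>x\<close> in \<open>G\<close> and take the vertex at the
  same position on the matched segment of \<open>H\<close>.\<close>

definition seg_map :: "'a \<Rightarrow> 'a" where
  "seg_map x = (case G.seg_rep (G.segment_of x) of (v, a) \<Rightarrow>
     H.walk v (matched_port v a) (G.seg_index v a x))"

lemma seg_map_on_segment:
  assumes p: "G.port v a" and x: "x \<in> G.segment v a"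
  obtains u b where "G.port u b" "G.seg_rep (G.segment_of x) = (u, b)" "G.segment u b = G.segment v a"
    "0 < G.seg_index u b x" "G.seg_index u b x < G.seg_len u b" "G.walk u b (G.seg_index u b x) = x"
    "seg_map x = H.walk u (matched_port u b) (G.seg_index u b x)"
proof -
  obtain u b where ub: "G.seg_rep (G.segment_of x) = (u, b)" by fastforce
  have S: "G.segment v a \<in> G.segments" using p unfolding G.segments_def by blast
  have "G.seg_rep (G.segment v a) = (u, b)" using ub G.segment_of_eq[OF p x] by simp
  then have q: "G.port u b" "G.segment u b = G.segment v a" using G.seg_rep_props[OF S] by auto
  then have "x \<in> G.segment u b" using x by simp
  then show ?thesis using that[OF q(1) ub q(2)] G.seg_index_props ub unfolding seg_map_def by simp
qed

lemma seg_map_in_matched_segment: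
  assumes p: "G.port v a" and x: "x \<in> G.segment v a"
  shows "seg_map x \<in> H.segment v (matched_port v a)"
proof -
  obtain u b where ub: "G.port u b" "G.seg_rep (G.segment_of x) = (u, b)" "G.segment u b = G.segment v a"
      "0 < G.seg_index u b x" "G.seg_index u b x < G.seg_len u b" "G.walk u b (G.seg_index u b x) = x"
      "seg_map x = H.walk u (matched_port u b) (G.seg_index u b x)"
    by (rule seg_map_on_segment[OF p x])
  then have "seg_map x \<in> H.segment u (matched_port u b)"
    using matched_port_props(3)[OF ub(1)] unfolding H.segment_def by auto
  then show ?thesis using matched_port_props(4)[OF ub(1)] matched_port_props(4)[OF p] ub(3) by simp
qed

lemma matched_segment_eq:
  assumes p: "G.port v a" and p': "G.port v' a'"
    and "H.segment v (matched_port v a) = H.segment v' (matched_port v' a')"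
  shows "G.segment v a = G.segment v' a'"
proof -
  have "seg_match (G.segment v a) = seg_match (G.segment v' a')"
    using assms matched_port_props(4)[OF p] matched_port_props(4)[OF p'] by simp
  then show ?thesis using seg_match_props(1) p p' unfolding bij_betw_def inj_on_def G.segments_def by blast
qed

lemma seg_map_common_port:
  assumes p: "G.port v a" and x: "x \<in> G.segment v a" and y: "y \<in> G.segment v a"
  obtains u b where "G.port u b"
    "0 < G.seg_index u b x" "G.seg_index u b x < G.seg_len u b" "G.walk u b (G.seg_index u b x) = x"
    "seg_map x = H.walk u (matched_port u b) (G.seg_index u b x)"
    "0 < G.seg_index u b y" "G.seg_index u b y < G.seg_len u b" "G.walk u b (G.seg_index u b y) = y"
    "seg_map y = H.walk u (matched_port u b) (G.seg_index u b y)"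
proof -
  obtain u b where x': "G.port u b" "G.seg_rep (G.segment_of x) = (u, b)" "G.segment u b = G.segment v a"
      "0 < G.seg_index u b x" "G.seg_index u b x < G.seg_len u b" "G.walk u b (G.seg_index u b x) = x"
      "seg_map x = H.walk u (matched_port u b) (G.seg_index u b x)"
    by (rule seg_map_on_segment[OF p x])
  obtain u' b' where y': "G.port u' b'" "G.seg_rep (G.segment_of y) = (u', b')" "G.segment u' b' = G.segment v a"
      "0 < G.seg_index u' b' y" "G.seg_index u' b' y < G.seg_len u' b'" "G.walk u' b' (G.seg_index u' b' y) = y"
      "seg_map y = H.walk u' (matched_port u' b') (G.seg_index u' b' y)"
    by (rule seg_map_on_segment[OF p y])
  have "(u', b') = (u, b)"
    using x'(2) y'(2) G.segment_of_eq[OF p x] G.segment_of_eq[OF p y] by simp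
  then show ?thesis using that x' y' by blast
qed

end

locale covered_cycle_nbhd_pair = cycle_nbhd_pair +
  assumes covered: "x \<in> X \<Longrightarrow> \<exists>v a. G.port v a \<and> x \<in> G.segment v a"
begin

lemma seg_map_in_X:
  assumes x: "x \<in> X"
  shows "seg_map x \<in> X"
proof -
  obtain v a where p: "G.port v a" "x \<in> G.segment v a" using covered[OF x] by blast
  then show ?thesis
    using seg_map_in_matched_segment[OF p] H.segment_subset_X[OF matched_port_props(1)[OF p(1)]] by blast
qed

lemma inj_on_seg_map: "inj_on seg_map X"
proof (rule inj_onI)
  fix x y assume x: "x \<in> X" and y: "y \<in> X" and e: "seg_map x = seg_map y"
  obtain v a where p: "G.port v a" "x \<in> G.segment v a" using covered[OF x] by blast
  obtain v' a' where p': "G.port v' a'" "y \<in> G.segment v' a'" using covered[OF y] by blast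
  have hx: "seg_map x \<in> H.segment v (matched_port v a)" by (rule seg_map_in_matched_segment[OF p])
  have hy: "seg_map x \<in> H.segment v' (matched_port v' a')" using seg_map_in_matched_segment[OF p'] e by simp
  have "H.segment v (matched_port v a) = H.segment v' (matched_port v' a')"
    by (rule H.segment_eq_if_common[OF matched_port_props(1)[OF p(1)] matched_port_props(1)[OF p'(1)] hx hy])
  then have "G.segment v a = G.segment v' a'" by (rule matched_segment_eq[OF p(1) p'(1)])
  then have y_in: "y \<in> G.segment v a" using p'(2) by simp
  obtain u b where P: "G.port u b"
      "0 < G.seg_index u b x" "G.seg_index u b x < G.seg_len u b" "G.walk u b (G.seg_index u b x) = x"
      "seg_map x = H.walk u (matched_port u b) (G.seg_index u b x)"
      "0 < G.seg_index u b y" "G.seg_index u b y < G.seg_len u b" "G.walk u b (G.seg_index u b y) = y"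
      "seg_map y = H.walk u (matched_port u b) (G.seg_index u b y)"
    by (rule seg_map_common_port[OF p y_in])
  have "G.seg_index u b x \<in> {1..<H.seg_len u (matched_port u b)}"
    "G.seg_index u b y \<in> {1..<H.seg_len u (matched_port u b)}"
    using P(2,3,6,7) matched_port_props(3)[OF P(1)] by auto
  moreover have "H.walk u (matched_port u b) (G.seg_index u b x) = H.walk u (matched_port u b) (G.seg_index u b y)"
    using P(5,9) e by simp
  ultimately have "G.seg_index u b x = G.seg_index u b y"
    using inj_onD[OF H.inj_on_segment[OF matched_port_props(1)[OF P(1)]]] by blast
  then show "x = y" using P(4,8) by metis
qed

lemma bij_betw_seg_map: "bij_betw seg_map X X"
  unfolding bij_betw_def using inj_on_seg_map endo_inj_surj[OF G.finite_X _ inj_on_seg_map] seg_map_in_X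
  by blast

lemma seg_map_adj_X:
  assumes x: "x \<in> X" and y: "y \<in> X"
  shows "adj x y \<longleftrightarrow> adj' (seg_map x) (seg_map y)"
proof -
  obtain v a where p: "G.port v a" "x \<in> G.segment v a" using covered[OF x] by blast
  have same: "adj x y \<longleftrightarrow> adj' (seg_map x) (seg_map y)" if y_in: "y \<in> G.segment v a"
  proof -
    obtain u b where P: "G.port u b"
        "0 < G.seg_index u b x" "G.seg_index u b x < G.seg_len u b" "G.walk u b (G.seg_index u b x) = x"
        "seg_map x = H.walk u (matched_port u b) (G.seg_index u b x)"
        "0 < G.seg_index u b y" "G.seg_index u b y < G.seg_len u b" "G.walk u b (G.seg_index u b y) = y"
        "seg_map y = H.walk u (matched_port u b) (G.seg_index u b y)"
      by (rule seg_map_common_port[OF p y_in])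
    have "adj x y \<longleftrightarrow> (G.seg_index u b y = Suc (G.seg_index u b x) \<or> G.seg_index u b x = Suc (G.seg_index u b y))"
      using G.adj_in_segment[OF P(1) P(2,3) P(6,7)] P(4,8) by simp
    also have "\<dots> \<longleftrightarrow> adj' (seg_map x) (seg_map y)"
      using H.adj_in_segment[of u "matched_port u b" "G.seg_index u b x" "G.seg_index u b y"] matched_port_props[OF P(1)] P
      by simp
    finally show ?thesis .
  qed
  show ?thesis
  proof
    assume "adj x y"
    then show "adj' (seg_map x) (seg_map y)" using same G.segment_closed[OF p] y by blast
  next
    assume xy: "adj' (seg_map x) (seg_map y)"
    obtain v' a' where p': "G.port v' a'" "y \<in> G.segment v' a'" using covered[OF y] by blast
    have "seg_map y \<in> H.segment v (matched_port v a)"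
      using H.segment_closed[OF matched_port_props(1)[OF p(1)] seg_map_in_matched_segment[OF p] xy] seg_map_in_X[OF y] .
    then have "H.segment v (matched_port v a) = H.segment v' (matched_port v' a')"
      using H.segment_eq_if_common[OF matched_port_props(1)[OF p(1)] matched_port_props(1)[OF p'(1)] _ seg_map_in_matched_segment[OF p']]
      by simp
    then have "G.segment v a = G.segment v' a'" using matched_segment_eq[OF p(1) p'(1)] by simp
    then show "adj x y" using same xy p' by simp
  qed
qed

lemma seg_map_adj_N:
  assumes v0: "v0 \<in> N" and x: "x \<in> X"
  shows "adj v0 x \<longleftrightarrow> adj' v0 (seg_map x)"
proof -
  obtain v a where p: "G.port v a" "x \<in> G.segment v a" using covered[OF x] by blast
  obtain u b where P: "G.port u b" "G.seg_rep (G.segment_of x) = (u, b)" "G.segment u b = G.segment v a"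
      "0 < G.seg_index u b x" "G.seg_index u b x < G.seg_len u b" "G.walk u b (G.seg_index u b x) = x"
      "seg_map x = H.walk u (matched_port u b) (G.seg_index u b x)"
    by (rule seg_map_on_segment[OF p])
  let ?i = "G.seg_index u b x"
  have "adj v0 x \<longleftrightarrow> adj (G.walk u b ?i) v0" using P(6) G.adj_sym by metis
  also have "\<dots> \<longleftrightarrow> (?i = 1 \<and> v0 = u) \<or> (?i = G.seg_len u b - 1 \<and> v0 = G.seg_end u b)"
    using G.N_nbr_of_segment[OF P(1) P(4,5) _ v0] G.N_nbr_of_segment_conv[OF P(1) P(4,5)] by blast
  also have "\<dots> \<longleftrightarrow> adj' (H.walk u (matched_port u b) ?i) v0"
    using H.N_nbr_of_segment[of u "matched_port u b" ?i v0] H.N_nbr_of_segment_conv[of u "matched_port u b" ?i v0]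
      matched_port_props[OF P(1)] P v0 by auto
  also have "\<dots> \<longleftrightarrow> adj' v0 (seg_map x)" using P(7) H.adj_sym by metis
  finally show ?thesis .
qed

end

section \<open>Switching a neighbourhood graph that is a union of cycles\<close>

text \<open>\<open>M\<close> is the switching matrix restricted to \<open>V = X \<union> N\<close>: it acts on \<open>N\<close> by signs \<open>s\<close>, and the
  adjacency matrix of the switched neighbourhood graph is \<open>M\<^sup>T A M\<close>.\<close>

locale nbhd_switching = G: cycle_nbhd V X N adjG
  for V X N :: "'a set" and adjG :: "'a \<Rightarrow> 'a \<Rightarrow> bool" +
  fixes adjH :: "'a \<Rightarrow> 'a \<Rightarrow> bool" and M :: "'a \<Rightarrow> 'a \<Rightarrow> real" and s :: "'a \<Rightarrow> real"
  assumes H_sym: "adjH u w \<Longrightarrow> adjH w u" and H_irrefl: "\<not> adjH u u"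
    and H_in_V: "adjH u w \<Longrightarrow> u \<in> V" and H_N_indep: "u \<in> N \<Longrightarrow> w \<in> N \<Longrightarrow> \<not> adjH u w"
    and M_orthogonal: "orthogonal_mat V M"
    and M_col_N: "v \<in> N \<Longrightarrow> M a v = (if a = v then s v else 0)"
    and M_row_N: "v \<in> N \<Longrightarrow> M v a = (if a = v then s v else 0)"
    and sign: "v \<in> N \<Longrightarrow> s v = 1 \<or> s v = -1"
    and H_conj: "u \<in> V \<Longrightarrow> w \<in> V \<Longrightarrow> rel_mat adjH u w = conj_mat V M (rel_mat adjG) u w"
begin

lemma sum_M_col_N:
  assumes v: "v \<in> N"
  shows "(\<Sum>a\<in>V. M a v * f a) = s v * f v"
proof -
  have "(\<Sum>a\<in>V. M a v * f a) = (\<Sum>a\<in>V. if a = v then s v * f v else 0)"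
    using M_col_N[OF v] by (intro sum.cong refl) auto
  then show ?thesis using G.finite_V v G.V_eq by simp
qed

lemma conj_mat_N:
  assumes u: "u \<in> N" and w: "w \<in> N"
  shows "conj_mat V M Z u w = s u * s w * Z u w"
proof -
  have "conj_mat V M Z u w = (\<Sum>x\<in>V. M x u * (\<Sum>y\<in>V. M y w * Z x y))"
    unfolding conj_mat_expand by (simp add: sum_distrib_left mult_ac)
  also have "\<dots> = (\<Sum>x\<in>V. M x u * (s w * Z x w))" using sum_M_col_N[OF w] by simp
  also have "\<dots> = s u * (s w * Z u w)" by (rule sum_M_col_N[OF u])
  finally show ?thesis by simp
qed

lemma G_row_sum:
  assumes u: "u \<in> V"
  shows "(\<Sum>w\<in>V. rel_mat adjG u w) = 2"
proof -
  have "{w\<in>V. adjG u w} = {w. adjG u w}" using G.adj_in_V' by blast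
  then show ?thesis using sum_rel_mat[OF G.finite_V, of adjG u] G.degree_two[OF u] by simp
qed

lemma H_row_sum: "u \<in> V \<Longrightarrow> (\<Sum>w\<in>V. rel_mat adjH u w) = 2"
  using conj_row_sums_eq[OF G.finite_V M_orthogonal H_conj _ _ G_row_sum] G.adj_sym
  unfolding rel_mat_def by auto

lemma H_degree_two:
  assumes u: "u \<in> V"
  shows "card {w. adjH u w} = 2"
proof -
  have "{w\<in>V. adjH u w} = {w. adjH u w}" using H_in_V H_sym by blast
  then show ?thesis using H_row_sum[OF u] sum_rel_mat[OF G.finite_V, of adjH u] by simp
qed

sublocale H: cycle_nbhd V X N adjH
  using G.finite_V G.V_eq G.X_N_disjoint H_sym H_irrefl H_in_V H_degree_two H_N_indep
  by unfold_locales auto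

lemma X_adj_mat_conj:
  assumes u: "u \<in> V" and w: "w \<in> V"
  shows "H.X_adj_mat u w = conj_mat V M G.X_adj_mat u w"
proof (cases "u \<in> X \<and> w \<in> X")
  case True
  have "H.X_adj_mat u w = conj_mat V M (rel_mat adjG) u w"
    using H_conj[OF u w] True unfolding H.X_adj_mat_def rel_mat_def by simp
  also have "\<dots> = conj_mat V M G.X_adj_mat u w"
    using True M_row_N G.X_N_disjoint G.V_eq
    by (intro conj_mat_cong) (auto simp: G.X_adj_mat_def rel_mat_def split: if_splits)
  finally show ?thesis .
next
  case False
  then have "u \<in> N \<or> w \<in> N" using u w G.V_eq by auto
  then have "conj_mat V M G.X_adj_mat u w = conj_mat V M (\<lambda>_ _. 0) u w"
    using M_col_N G.X_N_disjoint by (intro conj_mat_cong) (auto simp: G.X_adj_mat_def split: if_splits)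
  then show ?thesis using False unfolding H.X_adj_mat_def conj_mat_expand by auto
qed

lemma interior_walks_eq:
  assumes v: "v \<in> N" and w: "w \<in> N"
  shows "H.interior_walks j v w = G.interior_walks j v w"
proof -
  have vV: "v \<in> V" and wV: "w \<in> V" using v w G.V_eq by auto
  let ?A = "rel_mat adjG" and ?P = "mat_pow V G.X_adj_mat j"
  have "H.interior_walks j v w = mat_mult V (mat_mult V (rel_mat adjH) (mat_pow V H.X_adj_mat j)) (rel_mat adjH) v w"
    by (rule H.interior_walks_mat[OF v w])
  also have "\<dots> = mat_mult V (mat_mult V (conj_mat V M ?A) (conj_mat V M ?P)) (conj_mat V M ?A) v w"
  proof (rule mat_mult_cong)
    fix z assume z: "z \<in> V"
    show "mat_mult V (rel_mat adjH) (mat_pow V H.X_adj_mat j) v z = mat_mult V (conj_mat V M ?A) (conj_mat V M ?P) v z"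
      using H_conj conj_mat_pow[OF G.finite_V M_orthogonal X_adj_mat_conj] vV z by (intro mat_mult_cong) auto
    show "rel_mat adjH z w = conj_mat V M ?A z w" using H_conj z wV by simp
  qed
  also have "\<dots> = mat_mult V (conj_mat V M (mat_mult V ?A ?P)) (conj_mat V M ?A) v w"
    using conj_mat_mult[OF G.finite_V M_orthogonal vV] by (intro mat_mult_cong) auto
  also have "\<dots> = conj_mat V M (mat_mult V (mat_mult V ?A ?P) ?A) v w"
    using conj_mat_mult[OF G.finite_V M_orthogonal vV wV] by simp
  also have "\<dots> = s v * s w * G.interior_walks j v w"
    using conj_mat_N[OF v w] G.interior_walks_mat[OF v w] by simp
  finally have "H.interior_walks j v w = s v * s w * G.interior_walks j v w" .
  moreover have "s v * s w = 1 \<or> s v * s w = -1" using sign[OF v] sign[OF w] by auto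
  ultimately show ?thesis using G.interior_walks_nonneg[of j v w] H.interior_walks_nonneg[of j v w] by auto
qed

text \<open>Between two distinct vertices of \<open>N\<close>, the walks with interior in \<open>X\<close> are counted by the
  segments joining them, and these counts for all lengths determine the lengths of the segments.\<close>

lemma same_segment_counts:
  assumes v: "v \<in> N" and w: "w \<in> N" and vw: "v \<noteq> w"
  shows "card {x. adjG v x \<and> G.seg_end v x = w \<and> G.seg_len v x = l} =
    card {x. adjH v x \<and> H.seg_end v x = w \<and> H.seg_len v x = l}"
proof -
  let ?PG = "{x. adjG v x \<and> G.seg_end v x = w}" and ?PH = "{x. adjH v x \<and> H.seg_end v x = w}"
  have fin: "finite ?PG" "finite ?PH"
    using finite_subset[OF _ G.finite_V] G.adj_in_V' H.adj_in_V' by (metis (lifting) mem_Collect_eq subsetI)+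
  have pG: "2 \<le> G.seg_len v x" if "x \<in> ?PG" for x using G.seg_len_props(4)[of v x] that v unfolding G.port_def by simp
  have pH: "2 \<le> H.seg_len v x" if "x \<in> ?PH" for x using H.seg_len_props(4)[of v x] that v unfolding H.port_def by simp
  have eq: "(\<Sum>x\<in>?PG. end_walks (G.seg_len v x - 1) j) = (\<Sum>x\<in>?PH. end_walks (H.seg_len v x - 1) j)" for j
    using G.interior_walks_segments[OF v w vw, of j] H.interior_walks_segments[OF v w vw, of j]
      interior_walks_eq[OF v w, of j] by simp
  have fibres: "card {x\<in>?PG. G.seg_len v x - 1 = l'} = card {x\<in>?PH. H.seg_len v x - 1 = l'}" for l'
    by (rule card_fibres_eq_if_end_walk_sums_eq[OF fin _ _ eq]) (use pG pH in force)+
  show ?thesis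
  proof (cases l)
    case 0
    then have "{x. adjG v x \<and> G.seg_end v x = w \<and> G.seg_len v x = l} = {}"
      "{x. adjH v x \<and> H.seg_end v x = w \<and> H.seg_len v x = l} = {}"
      using pG pH by fastforce+
    then show ?thesis by (simp only: card.empty)
  next
    case (Suc l')
    then have "{x. adjG v x \<and> G.seg_end v x = w \<and> G.seg_len v x = l} = {x\<in>?PG. G.seg_len v x - 1 = l'}"
      "{x. adjH v x \<and> H.seg_end v x = w \<and> H.seg_len v x = l} = {x\<in>?PH. H.seg_len v x - 1 = l'}"
      using pG pH by fastforce+
    then show ?thesis using fibres[of l'] by simp
  qed
qed

text \<open>A segment from \<open>v\<close> back to \<open>v\<close> closes up to a whole cycle of the neighbourhood graph;
  \<open>card_component_le\<close> bounds either cycle by the other.\<close>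

lemma same_loop_lengths:
  assumes pa: "G.port v a" and ea: "G.seg_end v a = v" and pb: "H.port v b" and eb: "H.seg_end v b = v"
  shows "G.seg_len v a = H.seg_len v b"
proof -
  have vN: "v \<in> N" using pa unfolding G.port_def by simp
  let ?CG = "insert v (G.segment v a)" and ?CH = "insert v (H.segment v b)"
  have CG: "?CG \<subseteq> V" and CH: "?CH \<subseteq> V"
    using G.segment_subset_X[OF pa] H.segment_subset_X[OF pb] vN G.V_eq by auto
  have conn: "(v, c) \<in> {(x, y). x \<in> V \<and> y \<in> V \<and> 0 < rel_mat R x y}\<^sup>*"
    if "(v, c) \<in> {(x, y). R x y}\<^sup>*" and "\<And>x y. R x y \<Longrightarrow> x \<in> V \<and> y \<in> V" for R c
    using rtrancl_mono[of "{(x, y). R x y}" "{(x, y). x \<in> V \<and> y \<in> V \<and> 0 < rel_mat R x y}"] that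
    unfolding rel_mat_def by auto
  have connG: "(v, c) \<in> {(x, y). x \<in> V \<and> y \<in> V \<and> 0 < rel_mat adjG x y}\<^sup>*" if "c \<in> ?CG" for c
    using conn[OF G.loop_cycle_connected[OF pa that]] G.adj_in_V G.adj_in_V' by blast
  have connH: "(v, c) \<in> {(x, y). x \<in> V \<and> y \<in> V \<and> 0 < rel_mat adjH x y}\<^sup>*" if "c \<in> ?CH" for c
    using conn[OF H.loop_cycle_connected[OF pb that]] H.adj_in_V H.adj_in_V' by blast
  have Mv: "M x v = (if x = v then s v else 0)" "transpose_mat M x v = (if x = v then s v else 0)" for x
    using M_col_N[OF vN] M_row_N[OF vN] unfolding transpose_mat_def by auto
  have ss: "s v * s v = 1" using sign[OF vN] by auto
  have "card ?CH \<le> card ?CG"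
    by (rule card_component_le[OF G.finite_V M_orthogonal H_conj _ _ H_row_sum CG
          G.sum_loop_cycle[OF pa ea] _ Mv(1) ss CH connH])
      (auto simp: rel_mat_def H.adj_sym)
  moreover have "card ?CG \<le> card ?CH"
    by (rule card_component_le[OF G.finite_V orthogonal_mat_transpose[OF M_orthogonal]
          conj_mat_inverse[OF G.finite_V M_orthogonal H_conj] _ _ G_row_sum CH
          H.sum_loop_cycle[OF pb eb] _ Mv(2) ss CG connG])
      (auto simp: rel_mat_def G.adj_sym)
  ultimately show ?thesis using G.card_loop_cycle[OF pa] H.card_loop_cycle[OF pb] by simp
qed

sublocale cycle_nbhd_pair V X N adjG adjH
  by unfold_locales (fact same_segment_counts, fact same_loop_lengths)

lemma iso_fixing_N:
  assumes "\<And>x. x \<in> X \<Longrightarrow> \<exists>v a. G.port v a \<and> x \<in> G.segment v a"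
  obtains \<phi> where "bij_betw \<phi> X X" "\<And>x y. x \<in> X \<Longrightarrow> y \<in> X \<Longrightarrow> adjG x y \<longleftrightarrow> adjH (\<phi> x) (\<phi> y)"
    "\<And>v x. v \<in> N \<Longrightarrow> x \<in> X \<Longrightarrow> adjG v x \<longleftrightarrow> adjH v (\<phi> x)"
proof -
  interpret covered_cycle_nbhd_pair V X N adjG adjH by unfold_locales (fact assms)
  show ?thesis using that bij_betw_seg_map seg_map_adj_X seg_map_adj_N by blast
qed

end

section \<open>Neighbourhood graphs and \<open>Q\<close>-switching\<close>

lemma edge_endpoints:
  assumes "is_graph \<Gamma>" "{u, w} \<in> snd \<Gamma>"
  shows "u \<noteq> w \<and> u \<in> fst \<Gamma> \<and> w \<in> fst \<Gamma>"
proof -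
  obtain a b where ab: "{u, w} = {a, b}" "a \<noteq> b" "a \<in> fst \<Gamma>" "b \<in> fst \<Gamma>"
    using assms unfolding is_graph_def by blast
  then show ?thesis by (auto simp: doubleton_eq_iff)
qed

lemma cycle_graph_nbrs:
  assumes d: "distinct vs" "length vs = n" "3 \<le> n" "k < n"
  shows "card {w. \<exists>i. {vs ! k, w} = {vs ! i, vs ! (Suc i mod n)} \<and> i < n} = 2"
proof -
  define p where "p = (if Suc k = n then 0 else Suc k)"
  define q where "q = (if k = 0 then n - 1 else k - 1)"
  have suc_mod: "Suc i mod n = (if Suc i = n then 0 else Suc i)" if "i < n" for i
    using that by auto
  have pq: "p < n" "q < n" "p \<noteq> q" using d unfolding p_def q_def by auto
  have eqi: "vs ! i = vs ! j \<longleftrightarrow> i = j" if "i < n" "j < n" for i j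
    using nth_eq_iff_index_eq[OF d(1)] that d(2) by simp
  have "{w. \<exists>i. {vs ! k, w} = {vs ! i, vs ! (Suc i mod n)} \<and> i < n} = {vs ! p, vs ! q}"
  proof
    show "{w. \<exists>i. {vs ! k, w} = {vs ! i, vs ! (Suc i mod n)} \<and> i < n} \<subseteq> {vs ! p, vs ! q}"
    proof
      fix w assume "w \<in> {w. \<exists>i. {vs ! k, w} = {vs ! i, vs ! (Suc i mod n)} \<and> i < n}"
      then obtain i where i: "{vs ! k, w} = {vs ! i, vs ! (Suc i mod n)}" "i < n" by blast
      have smi: "Suc i mod n < n" using d(3) by simp
      from i(1) have "(vs ! k = vs ! i \<and> w = vs ! (Suc i mod n)) \<or> (vs ! k = vs ! (Suc i mod n) \<and> w = vs ! i)"
        by (simp add: doubleton_eq_iff)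
      then show "w \<in> {vs ! p, vs ! q}"
      proof
        assume h: "vs ! k = vs ! i \<and> w = vs ! (Suc i mod n)"
        then have "k = i" using eqi d(4) i(2) by simp
        then show ?thesis using h suc_mod[OF i(2)] unfolding p_def by simp
      next
        assume h: "vs ! k = vs ! (Suc i mod n) \<and> w = vs ! i"
        then have "k = Suc i mod n" using eqi d(4) smi by simp
        then have "i = q" using suc_mod[OF i(2)] i(2) unfolding q_def by (auto split: if_splits)
        then show ?thesis using h by simp
      qed
    qed
  next
    show "{vs ! p, vs ! q} \<subseteq> {w. \<exists>i. {vs ! k, w} = {vs ! i, vs ! (Suc i mod n)} \<and> i < n}"
    proof -
      have "{vs ! k, vs ! p} = {vs ! k, vs ! (Suc k mod n)}" using suc_mod[OF d(4)] unfolding p_def by simp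
      moreover have "Suc q mod n = k" using suc_mod[OF pq(2)] d unfolding q_def by auto
      then have "{vs ! k, vs ! q} = {vs ! q, vs ! (Suc q mod n)}" by auto
      ultimately show ?thesis using d(4) pq by blast
    qed
  qed
  moreover have "vs ! p \<noteq> vs ! q" using eqi pq by simp
  ultimately show ?thesis by simp
qed

lemma cycles_degree_two:
  assumes h: "disjoint_union_of is_cycle_graph \<Gamma>" and u: "u \<in> fst \<Gamma>"
  shows "card {w. {u, w} \<in> snd \<Gamma>} = 2"
proof -
  obtain C where C: "\<forall>c\<in>C. c \<noteq> {}" "\<Union>C = fst \<Gamma>" "\<forall>c\<in>C. \<forall>d\<in>C. c \<noteq> d \<longrightarrow> c \<inter> d = {}"
    "\<forall>e\<in>snd \<Gamma>. \<exists>c\<in>C. e \<subseteq> c" "\<forall>c\<in>C. is_cycle_graph (induced \<Gamma> c)"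
    using h unfolding disjoint_union_of_def by (elim exE conjE) (rule that; assumption)
  obtain c where c: "c \<in> C" "u \<in> c" using C(2) u by blast
  have "is_cycle_graph (induced \<Gamma> c)" using C(5) c(1) by blast
  then obtain vs where vs: "length vs \<ge> 3" "distinct vs" "set vs = fst (induced \<Gamma> c)"
    "snd (induced \<Gamma> c) = {{vs ! i, vs ! (Suc i mod length vs)} | i. i < length vs}"
    unfolding is_cycle_graph_def by (elim exE conjE) (rule that; assumption)
  have "{w. {u, w} \<in> snd \<Gamma>} = {w. {u, w} \<in> snd (induced \<Gamma> c)}"
  proof
    show "{w. {u, w} \<in> snd \<Gamma>} \<subseteq> {w. {u, w} \<in> snd (induced \<Gamma> c)}"
    proof
      fix w assume "w \<in> {w. {u, w} \<in> snd \<Gamma>}"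
      then have e: "{u, w} \<in> snd \<Gamma>" by simp
      then obtain c' where c': "c' \<in> C" "{u, w} \<subseteq> c'" using C(4) by blast
      then have "c' = c" using C(3) c by blast
      then show "w \<in> {w. {u, w} \<in> snd (induced \<Gamma> c)}" using e c' unfolding induced_def by simp
    qed
  next
    show "{w. {u, w} \<in> snd (induced \<Gamma> c)} \<subseteq> {w. {u, w} \<in> snd \<Gamma>}" unfolding induced_def by auto
  qed
  moreover have "u \<in> set vs" using vs(3) u c unfolding induced_def by simp
  then obtain k where k: "k < length vs" "u = vs ! k" by (metis in_set_conv_nth)
  ultimately have "{w. {u, w} \<in> snd \<Gamma>} = {w. {vs ! k, w} \<in> {{vs ! i, vs ! (Suc i mod length vs)} | i. i < length vs}}"
    using vs(4) by simp
  also have "\<dots> = {w. \<exists>i. {vs ! k, w} = {vs ! i, vs ! (Suc i mod length vs)} \<and> i < length vs}"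
    by simp
  finally show ?thesis using cycle_graph_nbrs[OF vs(2) refl vs(1) k(1)] by simp
qed

lemma nbhd_graph_edge_iff:
  "{u, w} \<in> snd (nbhd_graph \<Gamma> X) \<longleftrightarrow> {u, w} \<in> snd \<Gamma> \<and> (u \<in> X \<or> w \<in> X)"
  unfolding nbhd_graph_def by auto

lemma in_nbhd_if_nbhd_graph_edge:
  assumes "is_graph \<Gamma>" "{u, w} \<in> snd (nbhd_graph \<Gamma> X)" "u \<notin> X"
  shows "u \<in> nbhd \<Gamma> X"
  using assms edge_endpoints[OF assms(1)] unfolding nbhd_graph_edge_iff nbhd_def by (auto simp: insert_commute)

lemma cycle_nbhd_nbhd_graph:
  assumes \<Gamma>: "is_graph \<Gamma>" and X: "X \<subseteq> fst \<Gamma>"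
    and cycles: "disjoint_union_of is_cycle_graph (nbhd_graph \<Gamma> X)"
  shows "cycle_nbhd (X \<union> nbhd \<Gamma> X) X (nbhd \<Gamma> X - X) (\<lambda>u w. {u, w} \<in> snd (nbhd_graph \<Gamma> X))"
proof unfold_locales
  show "finite (X \<union> nbhd \<Gamma> X)"
    using \<Gamma> X unfolding is_graph_def nbhd_def by (auto intro: finite_subset)
  show "{w, u} \<in> snd (nbhd_graph \<Gamma> X)" if "{u, w} \<in> snd (nbhd_graph \<Gamma> X)" for u w
    using that by (simp add: insert_commute)
  show "{u, u} \<notin> snd (nbhd_graph \<Gamma> X)" for u
    using edge_endpoints[OF \<Gamma>, of u u] unfolding nbhd_graph_edge_iff by auto
  show "u \<in> X \<union> nbhd \<Gamma> X" if "{u, w} \<in> snd (nbhd_graph \<Gamma> X)" for u w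
    using in_nbhd_if_nbhd_graph_edge[OF \<Gamma> that] by blast
  show "card {w. {u, w} \<in> snd (nbhd_graph \<Gamma> X)} = 2" if "u \<in> X \<union> nbhd \<Gamma> X" for u
    using cycles_degree_two[OF cycles] that unfolding nbhd_graph_def by simp
  show "{u, w} \<notin> snd (nbhd_graph \<Gamma> X)" if "u \<in> nbhd \<Gamma> X - X" "w \<in> nbhd \<Gamma> X - X" for u w
    using that unfolding nbhd_graph_edge_iff by auto
qed auto

lemma switch_matrix_col_X: "u \<in> X \<Longrightarrow> switch_matrix X Q s x u \<noteq> 0 \<Longrightarrow> x \<in> X"
  unfolding switch_matrix_def by (auto split: if_splits)

lemma switch_matrix_not_X:
  assumes "u \<notin> X"
  shows "switch_matrix X Q s x u = (if x = u then s u else 0)" "switch_matrix X Q s u x = (if x = u then s u else 0)"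
  using assms unfolding switch_matrix_def by auto

lemma switch_matrix_rows:
  assumes S: "finite S" "X \<subseteq> S"
    and Q: "\<And>x y. x \<in> X \<Longrightarrow> y \<in> X \<Longrightarrow> (\<Sum>z\<in>X. Q x z * Q y z) = id_mat x y"
    and s: "\<forall>v\<in>S - X. s v * s v = 1" and x: "x \<in> S" and y: "y \<in> S"
  shows "(\<Sum>z\<in>S. switch_matrix X Q s x z * switch_matrix X Q s y z) = id_mat x y"
proof -
  let ?M = "switch_matrix X Q s"
  have single: "(\<Sum>z\<in>S. ?M u z * ?M t z) = s u * ?M t u" if "u \<in> S" "u \<notin> X" for u t
  proof -
    have "(\<Sum>z\<in>S. ?M u z * ?M t z) = (\<Sum>z\<in>S. if z = u then s u * ?M t u else 0)"
      using switch_matrix_not_X(2)[OF that(2)] by (intro sum.cong refl) auto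
    then show ?thesis using S that by simp
  qed
  show ?thesis
  proof (cases "x \<in> X")
    case xX: True
    show ?thesis
    proof (cases "y \<in> X")
      case True
      have "(\<Sum>z\<in>S. ?M x z * ?M y z) = (\<Sum>z\<in>X. ?M x z * ?M y z)"
        using S xX by (intro sum.mono_neutral_right) (auto simp: switch_matrix_def)
      then show ?thesis using Q[OF xX True] xX True by (simp add: switch_matrix_def)
    next
      case False
      have "(\<Sum>z\<in>S. ?M x z * ?M y z) = (\<Sum>z\<in>S. ?M y z * ?M x z)" by (simp add: mult.commute)
      then show ?thesis using single[OF y False, of x] xX False by (auto simp: id_mat_def switch_matrix_not_X)
    qed
  next
    case False
    then show ?thesis using single[OF x False, of y] s x
      by (auto simp: id_mat_def switch_matrix_def)
  qed
qed

lemma switch_matrix_orthogonal: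
  assumes S: "finite S" "X \<subseteq> S" and Q: "orthogonal_on X Q"
    and s: "\<And>v. v \<in> S - X \<Longrightarrow> s v = 1 \<or> s v = -1"
  shows "orthogonal_mat S (switch_matrix X Q s)"
proof -
  have sq: "\<forall>v\<in>S - X. s v * s v = 1" using s by fastforce
  have QT: "switch_matrix X (\<lambda>a b. Q b a) s a b = switch_matrix X Q s b a" for a b
    unfolding switch_matrix_def by auto
  have Q_rows: "(\<Sum>z\<in>X. Q x z * Q y z) = id_mat x y"
    and Q_cols: "(\<Sum>z\<in>X. Q z x * Q z y) = id_mat x y" if "x \<in> X" "y \<in> X" for x y
    using Q that unfolding orthogonal_on_def id_mat_def by auto
  have "(\<Sum>z\<in>S. switch_matrix X Q s x z * switch_matrix X Q s y z) = id_mat x y"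
    if "x \<in> S" "y \<in> S" for x y
    using switch_matrix_rows[OF S Q_rows sq that] .
  moreover have "(\<Sum>z\<in>S. switch_matrix X Q s z x * switch_matrix X Q s z y) = id_mat x y"
    if "x \<in> S" "y \<in> S" for x y
    using switch_matrix_rows[of S X "\<lambda>a b. Q b a", OF S Q_cols sq that] unfolding QT .
  ultimately show ?thesis unfolding orthogonal_mat_def mat_mult_def transpose_mat_def by auto
qed

lemma Q_switching_conj:
  assumes "Q_switching G H X Q"
  obtains s where "\<And>v. v \<in> fst G - X \<Longrightarrow> s v = 1 \<or> s v = -1"
    "\<And>u w. u \<in> fst G \<Longrightarrow> w \<in> fst G \<Longrightarrow> adjm H u w = conj_mat (fst G) (switch_matrix X Q s) (adjm G) u w"
  using assms unfolding Q_switching_def conj_mat_expand by blast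

lemma nbhd_Q_switching:
  assumes sw: "Q_switching G H X Q" and x: "x \<in> X" and w: "w \<in> fst G" "w \<notin> X"
    and e: "{x, w} \<in> snd H"
  shows "w \<in> nbhd G X"
proof (rule ccontr)
  assume nw: "w \<notin> nbhd G X"
  obtain s where conj: "\<And>u w. u \<in> fst G \<Longrightarrow> w \<in> fst G \<Longrightarrow>
      adjm H u w = conj_mat (fst G) (switch_matrix X Q s) (adjm G) u w"
    using Q_switching_conj[OF sw] by metis
  have xG: "x \<in> fst G" using sw x unfolding Q_switching_def by auto
  have "adjm H x w = conj_mat (fst G) (switch_matrix X Q s) (adjm G) x w" by (rule conj[OF xG w(1)])
  also have "\<dots> = conj_mat (fst G) (switch_matrix X Q s) (\<lambda>_ _. 0) x w"
    using nw w switch_matrix_col_X[OF x] switch_matrix_not_X(1)[OF w(2)]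
    by (intro conj_mat_cong) (auto simp: adjm_def nbhd_def insert_commute split: if_splits)
  also have "\<dots> = 0" unfolding conj_mat_expand by simp
  finally show False using e unfolding adjm_def by simp
qed

lemma nbhd_graph_conj:
  assumes gG: "is_graph G" and XG: "X \<subseteq> fst G"
    and conj: "\<And>u w. u \<in> fst G \<Longrightarrow> w \<in> fst G \<Longrightarrow>
      adjm H u w = conj_mat (fst G) (switch_matrix X Q s) (adjm G) u w"
    and u: "u \<in> X \<union> nbhd G X" and w: "w \<in> X \<union> nbhd G X"
  shows "rel_mat (\<lambda>u w. {u, w} \<in> snd (nbhd_graph H X)) u w =
    conj_mat (X \<union> nbhd G X) (switch_matrix X Q s) (rel_mat (\<lambda>u w. {u, w} \<in> snd (nbhd_graph G X))) u w"
proof -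
  let ?V = "X \<union> nbhd G X" and ?M = "switch_matrix X Q s"
  let ?adjG = "\<lambda>u w. {u, w} \<in> snd (nbhd_graph G X)" and ?adjH = "\<lambda>u w. {u, w} \<in> snd (nbhd_graph H X)"
  have VG: "?V \<subseteq> fst G" using XG unfolding nbhd_def by auto
  have fin: "finite (fst G)" using gG unfolding is_graph_def by simp
  have supp: "x \<in> ?V \<and> y \<in> ?V" if "rel_mat ?adjG x y \<noteq> 0" for x y
  proof -
    have "?adjG x y" "?adjG y x" using that unfolding rel_mat_def by (auto simp: insert_commute split: if_splits)
    then show ?thesis using in_nbhd_if_nbhd_graph_edge[OF gG] by blast
  qed
  show ?thesis
  proof (cases "u \<in> X \<or> w \<in> X")
    case True
    have "rel_mat ?adjH u w = adjm H u w"
      using True unfolding rel_mat_def adjm_def nbhd_graph_edge_iff by simp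
    also have "\<dots> = conj_mat (fst G) ?M (adjm G) u w" using conj u w VG by blast
    also have "\<dots> = conj_mat (fst G) ?M (rel_mat ?adjG) u w"
    proof (rule conj_mat_cong)
      fix x y assume "?M x u \<noteq> 0" "?M y w \<noteq> 0"
      then have "x \<in> X \<or> y \<in> X" using True switch_matrix_col_X by metis
      then show "adjm G x y = rel_mat ?adjG x y" unfolding adjm_def rel_mat_def nbhd_graph_edge_iff by auto
    qed
    also have "\<dots> = conj_mat ?V ?M (rel_mat ?adjG) u w"
      by (rule conj_mat_restrict[OF fin VG supp])
    finally show ?thesis .
  next
    case False
    have "conj_mat ?V ?M (rel_mat ?adjG) u w = conj_mat ?V ?M (\<lambda>_ _. 0) u w"
    proof (rule conj_mat_cong)
      fix x y assume "?M x u \<noteq> 0" "?M y w \<noteq> 0"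
      then have "x = u" "y = w" using False switch_matrix_not_X(1) by metis+
      then show "rel_mat ?adjG x y = 0" using False unfolding rel_mat_def nbhd_graph_edge_iff by simp
    qed
    then show ?thesis using False unfolding conj_mat_expand rel_mat_def nbhd_graph_edge_iff by simp
  qed
qed

lemma nbhd_switching_of_Q_switching:
  assumes sw: "Q_switching G H X Q" and cycles: "disjoint_union_of is_cycle_graph (nbhd_graph G X)"
  obtains s where "nbhd_switching (X \<union> nbhd G X) X (nbhd G X - X)
    (\<lambda>u w. {u, w} \<in> snd (nbhd_graph G X)) (\<lambda>u w. {u, w} \<in> snd (nbhd_graph H X)) (switch_matrix X Q s) s"
proof -
  let ?V = "X \<union> nbhd G X" and ?N = "nbhd G X - X"
  let ?adjG = "\<lambda>u w. {u, w} \<in> snd (nbhd_graph G X)" and ?adjH = "\<lambda>u w. {u, w} \<in> snd (nbhd_graph H X)"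
  have gG: "is_graph G" and gH: "is_graph H" and VH: "fst H = fst G" and XG: "X \<subseteq> fst G"
    and Q: "orthogonal_on X Q"
    using sw unfolding Q_switching_def by auto
  obtain s where s: "\<And>v. v \<in> fst G - X \<Longrightarrow> s v = 1 \<or> s v = -1"
    and conj: "\<And>u w. u \<in> fst G \<Longrightarrow> w \<in> fst G \<Longrightarrow>
      adjm H u w = conj_mat (fst G) (switch_matrix X Q s) (adjm G) u w"
    using Q_switching_conj[OF sw] by metis
  interpret G: cycle_nbhd ?V X ?N ?adjG by (rule cycle_nbhd_nbhd_graph[OF gG XG cycles])
  have VG: "?V \<subseteq> fst G" using XG unfolding nbhd_def by auto
  have "nbhd_switching ?V X ?N ?adjG ?adjH (switch_matrix X Q s) s"
  proof unfold_locales
    show "?adjH w u" if "?adjH u w" for u w using that by (simp add: insert_commute)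
    show "\<not> ?adjH u u" for u using edge_endpoints[OF gH, of u u] unfolding nbhd_graph_edge_iff by auto
    show "u \<in> ?V" if "?adjH u w" for u w
      using that nbhd_Q_switching[OF sw, of w u] edge_endpoints[OF gH, of u w] VH
      unfolding nbhd_graph_edge_iff by (auto simp: insert_commute)
    show "u \<in> ?N \<Longrightarrow> w \<in> ?N \<Longrightarrow> \<not> ?adjH u w" for u w unfolding nbhd_graph_edge_iff by auto
    show "orthogonal_mat ?V (switch_matrix X Q s)"
      using switch_matrix_orthogonal[OF G.finite_V _ Q, of s] s VG by auto
    show "v \<in> ?N \<Longrightarrow> switch_matrix X Q s a v = (if a = v then s v else 0)" for v a
      by (simp add: switch_matrix_not_X)
    show "v \<in> ?N \<Longrightarrow> switch_matrix X Q s v a = (if a = v then s v else 0)" for v a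
      by (simp add: switch_matrix_not_X)
    show "v \<in> ?N \<Longrightarrow> s v = 1 \<or> s v = -1" for v using s VG by auto
    show "u \<in> ?V \<Longrightarrow> w \<in> ?V \<Longrightarrow> rel_mat ?adjH u w = conj_mat ?V (switch_matrix X Q s) (rel_mat ?adjG) u w"
      for u w by (rule nbhd_graph_conj[OF gG XG conj])
  qed
  then show ?thesis by (rule that)
qed

lemma isomorphic_induced_fixing_outside:
  fixes \<Gamma> \<Delta> :: "'a graph"
  assumes \<phi>: "bij_betw \<phi> X X"
    and XX: "\<And>x y. x \<in> X \<Longrightarrow> y \<in> X \<Longrightarrow> {x, y} \<in> snd \<Gamma> \<longleftrightarrow> {\<phi> x, \<phi> y} \<in> snd \<Delta>"
    and YX: "\<And>v x. v \<in> Y - X \<Longrightarrow> x \<in> X \<Longrightarrow> {v, x} \<in> snd \<Gamma> \<longleftrightarrow> {v, \<phi> x} \<in> snd \<Delta>"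
    and \<Gamma>_X: "\<And>e. e \<in> snd \<Gamma> \<Longrightarrow> e \<inter> X \<noteq> {}" and \<Delta>_X: "\<And>e. e \<in> snd \<Delta> \<Longrightarrow> e \<inter> X \<noteq> {}"
    and \<Gamma>_V: "X \<union> Y \<subseteq> fst \<Gamma>" and \<Delta>_V: "X \<union> Y \<subseteq> fst \<Delta>"
  shows "isomorphic (induced \<Gamma> (X \<union> Y)) (induced \<Delta> (X \<union> Y))"
proof -
  define f where "f z = (if z \<in> X then \<phi> z else z)" for z
  have "bij_betw f X X" using \<phi> unfolding f_def by (rule bij_betw_cong[THEN iffD1, rotated]) auto
  moreover have "bij_betw f (Y - X) (Y - X)"
    unfolding f_def by (rule bij_betw_cong[THEN iffD1, rotated, OF bij_betw_id]) auto
  ultimately have "bij_betw f (X \<union> (Y - X)) (X \<union> (Y - X))" by (rule bij_betw_combine) auto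
  then have bij: "bij_betw f (X \<union> Y) (X \<union> Y)" by (simp add: Un_Diff_cancel)
  have edge: "{u, w} \<in> snd \<Gamma> \<longleftrightarrow> {f u, f w} \<in> snd \<Delta>" if u: "u \<in> X \<union> Y" and w: "w \<in> X \<union> Y" for u w
  proof (cases "u \<in> X"; cases "w \<in> X")
    assume "u \<in> X" "w \<in> X"
    then show ?thesis using XX unfolding f_def by simp
  next
    assume "u \<in> X" "w \<notin> X"
    then show ?thesis using YX[of w u] w unfolding f_def by (simp add: insert_commute)
  next
    assume "u \<notin> X" "w \<in> X"
    then show ?thesis using YX[of u w] u unfolding f_def by simp
  next
    assume "u \<notin> X" "w \<notin> X"
    then show ?thesis using \<Gamma>_X[of "{u, w}"] \<Delta>_X[of "{u, w}"] unfolding f_def by auto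
  qed
  have f_in: "f u \<in> X \<union> Y" if "u \<in> X \<union> Y" for u using bij that unfolding bij_betw_def by blast
  have vertices: "fst (induced \<Gamma> (X \<union> Y)) = X \<union> Y" "fst (induced \<Delta> (X \<union> Y)) = X \<union> Y"
    using \<Gamma>_V \<Delta>_V unfolding induced_def by auto
  show ?thesis unfolding isomorphic_def vertices
  proof (intro exI[of _ f] conjI bij ballI)
    fix u w assume "u \<in> X \<union> Y" "w \<in> X \<union> Y"
    then show "{u, w} \<in> snd (induced \<Gamma> (X \<union> Y)) \<longleftrightarrow> {f u, f w} \<in> snd (induced \<Delta> (X \<union> Y))"
      using edge f_in unfolding induced_def by simp
  qed
qed

theorem lemma3p9:
  fixes G H :: "'a graph" and X :: "'a set" and Q :: "'a \<Rightarrow> 'a \<Rightarrow> real"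
  assumes "Q_switching G H X Q"
    and "disjoint_union_of is_cycle_graph (nbhd_graph G X)"
    and "disjoint_union_of is_path_graph (induced (nbhd_graph G X) X)"
  shows "\<forall>Y. Y \<subseteq> nbhd G X \<longrightarrow>
           isomorphic (induced (nbhd_graph G X) (X \<union> Y)) (induced (nbhd_graph H X) (X \<union> Y))"
proof (intro allI impI)
  fix Y assume Y: "Y \<subseteq> nbhd G X"
  let ?adjG = "\<lambda>u w. {u, w} \<in> snd (nbhd_graph G X)" and ?adjH = "\<lambda>u w. {u, w} \<in> snd (nbhd_graph H X)"
  obtain s where "nbhd_switching (X \<union> nbhd G X) X (nbhd G X - X) ?adjG ?adjH (switch_matrix X Q s) s"
    using nbhd_switching_of_Q_switching[OF assms(1,2)] by blast
  then interpret nbhd_switching "X \<union> nbhd G X" X "nbhd G X - X" ?adjG ?adjH "switch_matrix X Q s" s .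
  have "fst (induced (nbhd_graph G X) X) = X" unfolding induced_def nbhd_graph_def by auto
  moreover have "{y, z} \<in> snd (induced (nbhd_graph G X) X) \<longleftrightarrow> ?adjG y z" if "y \<in> X" "z \<in> X" for y z
    using that unfolding induced_def by simp
  ultimately have covered: "\<exists>v a. G.port v a \<and> x \<in> G.segment v a" if "x \<in> X" for x
    using G.X_covered_by_segments[OF assms(3)] that by blast
  obtain \<phi> where \<phi>: "bij_betw \<phi> X X" "\<And>x y. x \<in> X \<Longrightarrow> y \<in> X \<Longrightarrow> ?adjG x y \<longleftrightarrow> ?adjH (\<phi> x) (\<phi> y)"
      "\<And>v x. v \<in> nbhd G X - X \<Longrightarrow> x \<in> X \<Longrightarrow> ?adjG v x \<longleftrightarrow> ?adjH v (\<phi> x)"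
    using iso_fixing_N[OF covered] by blast
  have gH: "is_graph H" using assms(1) unfolding Q_switching_def by blast
  have HY: "Y - X \<subseteq> nbhd H X"
  proof
    fix y assume y: "y \<in> Y - X"
    then obtain w where "?adjH y w" using H.nbr_exists Y by blast
    then show "y \<in> nbhd H X" using in_nbhd_if_nbhd_graph_edge[OF gH] y by blast
  qed
  show "isomorphic (induced (nbhd_graph G X) (X \<union> Y)) (induced (nbhd_graph H X) (X \<union> Y))"
  proof (rule isomorphic_induced_fixing_outside[OF \<phi>(1)])
    show "?adjG x y \<longleftrightarrow> ?adjH (\<phi> x) (\<phi> y)" if "x \<in> X" "y \<in> X" for x y
      using \<phi>(2) that by blast
    show "?adjG v x \<longleftrightarrow> ?adjH v (\<phi> x)" if "v \<in> Y - X" "x \<in> X" for v x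
      using \<phi>(3) that Y by blast
    show "e \<inter> X \<noteq> {}" if "e \<in> snd (nbhd_graph G X)" for e using that unfolding nbhd_graph_def by simp
    show "e \<inter> X \<noteq> {}" if "e \<in> snd (nbhd_graph H X)" for e using that unfolding nbhd_graph_def by simp
    show "X \<union> Y \<subseteq> fst (nbhd_graph G X)" using Y unfolding nbhd_graph_def by auto
    show "X \<union> Y \<subseteq> fst (nbhd_graph H X)" using HY unfolding nbhd_graph_def by auto
  qed
qed

end
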